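(* Let $n\ge1$ and let $\lambda$ be a partition with $\ell(\lambda)\le n$. Then \[ \mathrm{spo}_{\lambda}(x_1,\dots,x_n;y)=\frac{1}{D}\det\left(x_i^{\lambda_j+n-j+1}-\bar x_i^{\lambda_j+n-j+1}+y\left(x_i^{\lambda_j+n-j}-\bar x_i^{\lambda_j+n-j}\right)\right)_{1\le i,j\le n}, \] where $D=\prod_{i=1}^n(x_i-\bar x_i)\prod_{1\le i<j\le n}(x_i+\bar x_i-x_j-\bar x_j)$.
   Context: $\bar x=1/x$. Here $m=1$, i.e. $Y=(y)$ is a single variable. Orthosymplectic Schur function: order $1<\bar1<\cdots<n<\bar n<1'<\cdots<m'$; an orthosymplectic tableau of shape $\lambda$ is a filling of the Young diagram of $\lambda$ such that the entries from $\{1,\bar1,\dots,n,\bar n\}$ form a symplectic tableau (weakly increasing along rows, strictly increasing down columns, entries in row $i$ are $\ge i$) and the remaining primed entries form a skew filling strictly increasing along rows and weakly increasing down columns; weight $\prod_i x_i^{\#i-\#\bar i}\prod_j y_j^{\#j'}$; $\mathrm{spo}_\lambda(X;Y)$ is the sum of weights over all such tableaux. *)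

theory Defs
  imports "Jordan_Normal_Form.Determinant" "HOL-Library.FuncSet"
begin

text \<open>Entries of an orthosymplectic tableau: Unb i = i, Bar i = \<bar>i, Pr j = j'.
  Order: 1 < 1bar < ... < n < nbar < 1' < ... < m', encoded by the key below.\<close>

datatype ospent = Unb nat | Bar nat | Pr nat

fun osp_key :: "nat \<Rightarrow> ospent \<Rightarrow> nat" where
  "osp_key n (Unb i) = 2 * i"
| "osp_key n (Bar i) = 2 * i + 1"
| "osp_key n (Pr j) = 2 * n + 1 + j"

fun is_primed :: "ospent \<Rightarrow> bool" where
  "is_primed (Pr j) = True"
| "is_primed _ = False"

fun sym_index :: "ospent \<Rightarrow> nat" where
  "sym_index (Unb i) = i"
| "sym_index (Bar i) = i"
| "sym_index (Pr j) = 0"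

definition osp_entries :: "nat \<Rightarrow> nat \<Rightarrow> ospent set" where
  "osp_entries n m = Unb ` {1..n} \<union> Bar ` {1..n} \<union> Pr ` {1..m}"

text \<open>A partition with at most n parts is given as a weakly decreasing list of length n
  (padded with zeros).  Cells are (row, column), 0-indexed.\<close>

definition diagram :: "nat list \<Rightarrow> (nat \<times> nat) set" where
  "diagram lam = {(r, c). r < length lam \<and> c < lam ! r}"

text \<open>Primed entries: strictly
  increasing in rows, weakly down columns; unprimed entries precede primed ones (so the
  unprimed entries occupy a Young subdiagram and the primed ones a skew shape).\<close>

definition is_osp_tableau :: "nat \<Rightarrow> nat \<Rightarrow> nat list \<Rightarrow> (nat \<times> nat \<Rightarrow> ospent) \<Rightarrow> bool" where
  "is_osp_tableau n m lam T \<longleftrightarrow>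
     T \<in> (diagram lam \<rightarrow>\<^sub>E osp_entries n m) \<and>
     (\<forall>r c. (r, c) \<in> diagram lam \<and> (r, Suc c) \<in> diagram lam \<longrightarrow>
        osp_key n (T (r, c)) \<le> osp_key n (T (r, Suc c)) \<and>
        (is_primed (T (r, c)) \<and> is_primed (T (r, Suc c)) \<longrightarrow>
           osp_key n (T (r, c)) < osp_key n (T (r, Suc c)))) \<and>
     (\<forall>r c. (r, c) \<in> diagram lam \<and> (Suc r, c) \<in> diagram lam \<longrightarrow>
        osp_key n (T (r, c)) \<le> osp_key n (T (Suc r, c)) \<and>
        (\<not> is_primed (T (r, c)) \<and> \<not> is_primed (T (Suc r, c)) \<longrightarrow>
           osp_key n (T (r, c)) < osp_key n (T (Suc r, c)))) \<and>
     (\<forall>r c. (r, c) \<in> diagram lam \<and> \<not> is_primed (T (r, c)) \<longrightarrow> Suc r \<le> sym_index (T (r, c)))"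

definition osp_count :: "nat list \<Rightarrow> (nat \<times> nat \<Rightarrow> ospent) \<Rightarrow> ospent \<Rightarrow> nat" where
  "osp_count lam T e = card {p \<in> diagram lam. T p = e}"

definition osp_weight ::
  "nat \<Rightarrow> nat \<Rightarrow> nat list \<Rightarrow> (nat \<Rightarrow> 'a::field) \<Rightarrow> (nat \<Rightarrow> 'a) \<Rightarrow> (nat \<times> nat \<Rightarrow> ospent) \<Rightarrow> 'a" where
  "osp_weight n m lam x y T =
     (\<Prod>i\<in>{1..n}. x i ^ osp_count lam T (Unb i) * inverse (x i) ^ osp_count lam T (Bar i)) *
     (\<Prod>j\<in>{1..m}. y j ^ osp_count lam T (Pr j))"

text \<open>spo_lambda(x_1..x_n; y_1..y_m), variables indexed from 1.\<close>
definition spo :: "nat \<Rightarrow> nat \<Rightarrow> nat list \<Rightarrow> (nat \<Rightarrow> 'a::field) \<Rightarrow> (nat \<Rightarrow> 'a) \<Rightarrow> 'a" where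
  "spo n m lam x y = (\<Sum>T\<in>{T. is_osp_tableau n m lam T}. osp_weight n m lam x y T)"

end

theory Submission
  imports Defs
begin

(* The primed letter of an orthosymplectic tableau with a single primed variable fills a
   vertical strip s/nu, and the remaining entries form a King (symplectic) tableau of shape nu,
   so spo_s(x; y) = sum_nu y^(|s| - |nu|) sp_nu(x).  King's formula, sp_nu = A_nu / D with
   A_nu = det(x_i^(nu_j+n-j+1) - xbar_i^(nu_j+n-j+1)), is proved by induction on n: deleting
   the letters nbar and then n from a King tableau removes two horizontal strips, and the same
   double sum appears when A_s is expanded by multilinearity in its columns after its entries
   have been telescoped.  Finally, expanding the y-deformed determinant column by column gives
   sum_eps y^|eps| times alternants with exponents lowered by eps in {0,1}^n; the terms for
   which s - eps is not a partition vanish (two equal columns, or a zero column), and the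
   others are indexed by the vertical strips s/nu. *)

subsection \<open>Determinants of explicit matrices\<close>

lemma det_mat_leibniz:
  "det (mat n n f) = (\<Sum>p | p permutes {0..<n}. signof p * (\<Prod>i = 0..<n. f (i, p i)))"
  by (subst det_def'[of _ n]) (auto intro!: sum.cong prod.cong simp: permutes_in_image)

lemma det_mat_cong:
  assumes "\<And>i j. i < n \<Longrightarrow> j < n \<Longrightarrow> f (i, j) = g (i, j)"
  shows "det (mat n n f) = det (mat n n g)"
proof -
  have "mat n n f = mat n n g" by (rule eq_matI) (use assms in auto)
  then show ?thesis by simp
qed

lemma det_mat_transpose: "det (mat n n (\<lambda>(i, j). M j i)) = det (mat n n (\<lambda>(i, j). M i j))"
proof -
  have "mat n n (\<lambda>(i, j). M j i) = transpose_mat (mat n n (\<lambda>(i, j). M i j))"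
    by (rule eq_matI) auto
  then show ?thesis by (metis det_transpose mat_carrier)
qed

lemma det_mat_scale_rows:
  "det (mat n n (\<lambda>(i, j). a i * M i j)) = (\<Prod>i<n. a i) * det (mat n n (\<lambda>(i, j). M i j))"
proof -
  have "det (mat n n (\<lambda>(i, j). a i * M i j)) =
      (\<Sum>p | p permutes {0..<n}. signof p * (\<Prod>i = 0..<n. a i * M i (p i)))"
    by (simp add: det_mat_leibniz)
  also have "\<dots> = (\<Sum>p | p permutes {0..<n}. (\<Prod>i<n. a i) * (signof p * (\<Prod>i = 0..<n. M i (p i))))"
    by (intro sum.cong refl) (simp add: prod.distrib atLeast0LessThan mult_ac)
  also have "\<dots> = (\<Prod>i<n. a i) * det (mat n n (\<lambda>(i, j). M i j))"
    by (simp add: det_mat_leibniz sum_distrib_left)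
  finally show ?thesis .
qed

lemma det_mat_scale_cols:
  "det (mat n n (\<lambda>(i, j). b j * M i j)) = (\<Prod>j<n. b j) * det (mat n n (\<lambda>(i, j). M i j))"
proof -
  have "det (mat n n (\<lambda>(i, j). b j * M i j)) = det (mat n n (\<lambda>(i, j). b i * M j i))"
    by (rule det_mat_transpose[of n "\<lambda>i j. b i * M j i"])
  also have "\<dots> = (\<Prod>j<n. b j) * det (mat n n (\<lambda>(i, j). M j i))"
    by (rule det_mat_scale_rows)
  also have "det (mat n n (\<lambda>(i, j). M j i)) = det (mat n n (\<lambda>(i, j). M i j))"
    by (rule det_mat_transpose)
  finally show ?thesis .
qed

lemma det_mat_sum_rows:
  fixes g :: "nat \<Rightarrow> nat \<Rightarrow> 'b \<Rightarrow> 'a::comm_ring_1"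
  assumes "\<And>i. i < n \<Longrightarrow> finite (K i)"
  shows "det (mat n n (\<lambda>(i, j). \<Sum>k\<in>K i. g i j k)) =
         (\<Sum>c\<in>PiE {0..<n} K. det (mat n n (\<lambda>(i, j). g i j (c i))))"
proof -
  let ?P = "{p. p permutes {0..<n}}"
  have "(\<Prod>i = 0..<n. \<Sum>k\<in>K i. g i (p i) k) = (\<Sum>c\<in>PiE {0..<n} K. \<Prod>i = 0..<n. g i (p i) (c i))" for p
    by (rule prod_sum_PiE) (use assms in auto)
  then have "det (mat n n (\<lambda>(i, j). \<Sum>k\<in>K i. g i j k)) =
      (\<Sum>p\<in>?P. signof p * (\<Sum>c\<in>PiE {0..<n} K. \<Prod>i = 0..<n. g i (p i) (c i)))"
    by (simp add: det_mat_leibniz)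
  also have "\<dots> = (\<Sum>c\<in>PiE {0..<n} K. \<Sum>p\<in>?P. signof p * (\<Prod>i = 0..<n. g i (p i) (c i)))"
    by (simp add: sum_distrib_left sum.swap[of _ ?P])
  finally show ?thesis by (simp add: det_mat_leibniz)
qed

lemma det_mat_sum_cols:
  fixes g :: "nat \<Rightarrow> nat \<Rightarrow> 'b \<Rightarrow> 'a::comm_ring_1"
  assumes "\<And>j. j < n \<Longrightarrow> finite (K j)"
  shows "det (mat n n (\<lambda>(i, j). \<Sum>k\<in>K j. g i j k)) =
         (\<Sum>c\<in>PiE {0..<n} K. det (mat n n (\<lambda>(i, j). g i j (c j))))"
proof -
  have "det (mat n n (\<lambda>(i, j). \<Sum>k\<in>K j. g i j k)) = det (mat n n (\<lambda>(i, j). \<Sum>k\<in>K i. g j i k))"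
    by (rule det_mat_transpose[of n "\<lambda>i j. \<Sum>k\<in>K i. g j i k"])
  also have "\<dots> = (\<Sum>c\<in>PiE {0..<n} K. det (mat n n (\<lambda>(i, j). g j i (c i))))"
    by (rule det_mat_sum_rows) (rule assms)
  also have "\<dots> = (\<Sum>c\<in>PiE {0..<n} K. det (mat n n (\<lambda>(i, j). g i j (c j))))"
    by (intro sum.cong refl) (rule det_mat_transpose)
  finally show ?thesis .
qed

lemma det_mat_zero_col:
  assumes "j < n" and "\<And>i. i < n \<Longrightarrow> f (i, j) = 0"
  shows "det (mat n n f) = (0::'a::comm_ring_1)"
  using laplace_expansion_column[of "mat n n f" n j] assms by simp

lemma det_mat_eq_adjacent_cols:
  assumes "Suc j < n" and "\<And>i. i < n \<Longrightarrow> f (i, j) = f (i, Suc j)"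
  shows "det (mat n n f) = (0::'a::comm_ring_1)"
  by (rule det_identical_columns[of _ n j "Suc j"]) (use assms in \<open>auto simp: col_def\<close>)

text \<open>Subtracting from every column a multiple of the next one is right multiplication by a
  unitriangular matrix.\<close>

lemma det_mat_sub_next_col:
  fixes M :: "nat \<Rightarrow> nat \<Rightarrow> 'a::comm_ring_1"
  shows "det (mat n n (\<lambda>(i, j). M i j - (if Suc j < n then c j * M i (Suc j) else 0))) =
         det (mat n n (\<lambda>(i, j). M i j))"
proof -
  let ?U = "mat n n (\<lambda>(k, j). if k = j then 1 else if k = Suc j then - c j else (0::'a))"
  have U: "?U \<in> carrier_mat n n" by simp
  have dU: "det ?U = 1"
  proof -
    have "det ?U = prod_list (diag_mat ?U)"
      by (rule det_lower_triangular[of n]) auto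
    also have "diag_mat ?U = map (\<lambda>_. 1) [0..<n]"
      by (auto simp: diag_mat_def)
    also have "prod_list (map (\<lambda>_. (1::'a)) [0..<n]) = 1"
      by (induct n) auto
    finally show ?thesis .
  qed
  have eq: "mat n n (\<lambda>(i, j). M i j - (if Suc j < n then c j * M i (Suc j) else 0)) =
        mat n n (\<lambda>(i, j). M i j) * ?U"
  proof (rule eq_matI)
    fix i j assume i: "i < dim_row (mat n n (\<lambda>(i, j). M i j) * ?U)" and j: "j < dim_col (mat n n (\<lambda>(i, j). M i j) * ?U)"
    hence i: "i < n" and j: "j < n" by auto
    have "(mat n n (\<lambda>(i, j). M i j) * ?U) $$ (i, j) = (\<Sum>k = 0..<n. M i k * ?U $$ (k, j))"
      using i j by (simp add: scalar_prod_def)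
    also have "\<dots> = (\<Sum>k = 0..<n. (if k = j then M i j else 0) + (if k = Suc j then - c j * M i (Suc j) else 0))"
      using j by (intro sum.cong refl) auto
    also have "\<dots> = M i j - (if Suc j < n then c j * M i (Suc j) else 0)"
      using j by (simp add: sum.distrib)
    finally show "mat n n (\<lambda>(i, j). M i j - (if Suc j < n then c j * M i (Suc j) else 0)) $$ (i, j) =
        (mat n n (\<lambda>(i, j). M i j) * ?U) $$ (i, j)" using i j by simp
  qed auto
  show ?thesis unfolding eq by (subst det_mult[OF _ U]) (auto simp: dU)
qed

text \<open>With e m = 1 and e j = c j * e (Suc j), subtracting c j times column j+1 from column j
  clears the last row except for its final entry.\<close>

lemma det_mat_expand_last_row:
  fixes P :: "nat \<Rightarrow> nat \<Rightarrow> 'a::comm_ring_1"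
  assumes e1: "e m = 1" and ec: "\<And>j. j < m \<Longrightarrow> e j = c j * e (Suc j)"
  shows "det (mat (Suc m) (Suc m) (\<lambda>(i, j). if i < m then P i j else e j)) =
         det (mat m m (\<lambda>(i, j). P i j - c j * P i (Suc j)))"
proof -
  let ?M = "\<lambda>i j. if i < m then P i j else e j"
  let ?N = "mat (Suc m) (Suc m) (\<lambda>(i, j). ?M i j - (if Suc j < Suc m then c j * ?M i (Suc j) else 0))"
  have "det (mat (Suc m) (Suc m) (\<lambda>(i, j). ?M i j)) = det ?N"
    by (rule det_mat_sub_next_col[symmetric])
  also have "det ?N = (\<Sum>j<Suc m. ?N $$ (m, j) * cofactor ?N m j)"
    by (rule laplace_expansion_row) auto
  also have "\<dots> = (\<Sum>j<Suc m. (if j = m then cofactor ?N m m else 0))"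
    by (intro sum.cong refl) (auto simp: ec e1)
  also have "\<dots> = cofactor ?N m m" by simp
  also have "\<dots> = det (mat_delete ?N m m)" by (simp add: cofactor_def)
  also have "mat_delete ?N m m = mat m m (\<lambda>(i, j). P i j - c j * P i (Suc j))"
    by (rule eq_matI) (auto simp: mat_delete_def)
  finally show ?thesis by simp
qed

subsection \<open>The symplectic alternant and its branching\<close>

definition pow_sub_inv :: "nat \<Rightarrow> 'a::field \<Rightarrow> 'a" where
  "pow_sub_inv k u = u ^ k - inverse u ^ k"

definition pow_sub_inv_shift :: "'a::field \<Rightarrow> nat \<Rightarrow> 'a \<Rightarrow> 'a" where
  "pow_sub_inv_shift z k u = pow_sub_inv (Suc k) u - inverse z * pow_sub_inv k u"

lemma pow_sub_inv_0 [simp]: "pow_sub_inv 0 u = 0"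
  by (simp add: pow_sub_inv_def)

lemma pow_sub_inv_step:
  fixes u z :: "'a::field"
  assumes "u \<noteq> 0" and "z \<noteq> 0"
  shows "(u + inverse u - z - inverse z) * pow_sub_inv (Suc k) u =
         pow_sub_inv_shift z (Suc k) u - z * pow_sub_inv_shift z k u"
  using assms by (simp add: pow_sub_inv_shift_def pow_sub_inv_def field_simps)

lemma pow_sub_inv_shift_self:
  assumes "z \<noteq> 0"
  shows "pow_sub_inv_shift z k z = (z - inverse z) * z ^ k"
  using assms by (simp add: pow_sub_inv_shift_def pow_sub_inv_def field_simps)

lemma sum_telescope_geometric:
  fixes \<phi> :: "nat \<Rightarrow> 'a::comm_ring_1"
  assumes "p \<le> q"
  shows "(\<Sum>a\<in>{p..q}. w ^ (q - a) * (\<phi> (Suc a) - w * \<phi> a)) = \<phi> (Suc q) - w ^ Suc (q - p) * \<phi> p"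
proof -
  obtain d where q: "q = p + d" using assms le_Suc_ex by blast
  have "(\<Sum>a\<in>{p..p + d}. w ^ (p + d - a) * (\<phi> (Suc a) - w * \<phi> a)) = \<phi> (Suc (p + d)) - w ^ Suc d * \<phi> p"
  proof (induction d)
    case (Suc d)
    have "(\<Sum>a\<in>{p..p + d}. w ^ (p + Suc d - a) * (\<phi> (Suc a) - w * \<phi> a)) =
        w * (\<Sum>a\<in>{p..p + d}. w ^ (p + d - a) * (\<phi> (Suc a) - w * \<phi> a))"
      unfolding sum_distrib_left by (intro sum.cong refl) (simp add: Suc_diff_le)
    then have "(\<Sum>a\<in>{p..p + Suc d}. w ^ (p + Suc d - a) * (\<phi> (Suc a) - w * \<phi> a)) =
        (\<phi> (Suc (Suc (p + d))) - w * \<phi> (Suc (p + d))) + w * (\<phi> (Suc (p + d)) - w ^ Suc d * \<phi> p)"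
      by (simp add: atLeastAtMostSuc_conv Suc.IH)
    then show ?case by (simp add: algebra_simps)
  qed simp
  then show ?thesis by (simp add: q)
qed

text \<open>Rows and columns are 0-indexed, so the exponent s j + n - j is the paper's
  \<lambda>_(j+1) + n - (j+1) + 1.\<close>

definition sp_alternant :: "(nat \<Rightarrow> 'a::field) \<Rightarrow> nat \<Rightarrow> (nat \<Rightarrow> nat) \<Rightarrow> 'a" where
  "sp_alternant X n s = det (mat n n (\<lambda>(i, j). pow_sub_inv (s j + n - j) (X i)))"

lemma sp_alternant_cong: "(\<And>j. j < n \<Longrightarrow> s j = s' j) \<Longrightarrow> sp_alternant X n s = sp_alternant X n s'"
  unfolding sp_alternant_def by (rule det_mat_cong) auto

text \<open>Shapes \<mu> with s/\<mu> a horizontal strip, and with row r empty when K \<le> 2r: the shapes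
  left over when the letter K is deleted from a King tableau of shape s with letters \<le> K
  (letter 2i stands for x_(i+1), letter 2i+1 for its inverse).\<close>

definition branch_shapes :: "nat \<Rightarrow> nat \<Rightarrow> (nat \<Rightarrow> nat) \<Rightarrow> (nat \<Rightarrow> nat) set" where
  "branch_shapes K n s = {\<mu>. (\<forall>r<n. s (Suc r) \<le> \<mu> r \<and> \<mu> r \<le> s r \<and> (K \<le> 2*r \<longrightarrow> \<mu> r = 0)) \<and>
                            (\<forall>r. n \<le> r \<longrightarrow> \<mu> r = 0)}"

lemma branch_shapes_Suc:
  assumes "K \<le> 2*m" and "s (Suc m) = 0"
  shows "branch_shapes K (Suc m) s = branch_shapes K m s"
proof -
  have "\<mu> \<in> branch_shapes K (Suc m) s \<longleftrightarrow> \<mu> \<in> branch_shapes K m s" for \<mu>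
  proof
    assume \<mu>: "\<mu> \<in> branch_shapes K (Suc m) s"
    then have "\<mu> m = 0" using assms(1) by (auto simp: branch_shapes_def)
    then have "\<mu> r = 0" if "m \<le> r" for r
      using \<mu> that by (cases "r = m") (auto simp: branch_shapes_def)
    with \<mu> show "\<mu> \<in> branch_shapes K m s"
      by (auto simp: branch_shapes_def)
  next
    assume "\<mu> \<in> branch_shapes K m s"
    then show "\<mu> \<in> branch_shapes K (Suc m) s"
      using assms(2) by (auto simp: branch_shapes_def less_Suc_eq)
  qed
  then show ?thesis by blast
qed

lemma branch_shapes_mono: "\<mu> \<in> branch_shapes K n s \<Longrightarrow> \<mu> (Suc r) \<le> \<mu> r"
  unfolding branch_shapes_def by (cases "Suc r < n") (auto intro: le_trans)

lemma sum_branch_shapes_PiE: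
  assumes "2*n \<le> Suc K"
  shows "(\<Sum>\<mu>\<in>branch_shapes K n s. f \<mu>) =
         (\<Sum>c\<in>PiE {0..<n} (\<lambda>r. {s (Suc r)..s r}). f (\<lambda>r. if r < n then c r else 0))"
proof -
  let ?ext = "\<lambda>c r. if r < n then c r else (0::nat)" and ?P = "PiE {0..<n} (\<lambda>r. {s (Suc r)..s r})"
  have inj: "inj_on ?ext ?P"
  proof (rule inj_onI, rule ext)
    fix c c' r assume c: "c \<in> ?P" and c': "c' \<in> ?P" and eq: "?ext c = ?ext c'"
    have "?ext c r = ?ext c' r" by (rule fun_cong[OF eq])
    then show "c r = c' r" using c c' by (cases "r < n") (auto simp: PiE_def extensional_def)
  qed
  have "branch_shapes K n s = ?ext ` ?P"
  proof (intro equalityI subsetI)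
    fix \<mu> assume \<mu>: "\<mu> \<in> branch_shapes K n s"
    then have "\<mu> = ?ext (restrict \<mu> {0..<n})" by (auto simp: branch_shapes_def fun_eq_iff)
    moreover have "restrict \<mu> {0..<n} \<in> ?P" using \<mu> by (auto simp: branch_shapes_def)
    ultimately show "\<mu> \<in> ?ext ` ?P" by blast
  next
    fix \<mu> assume "\<mu> \<in> ?ext ` ?P"
    then show "\<mu> \<in> branch_shapes K n s" using assms by (auto simp: branch_shapes_def)
  qed
  then show ?thesis by (simp add: sum.reindex[OF inj])
qed

lemma inner_branch_sum:
  assumes "\<nu> (Suc m) = 0"
  shows "(\<Sum>\<mu>\<in>branch_shapes (2*m) (Suc m) \<nu>. (\<Prod>r<Suc m. z ^ (\<nu> r - \<mu> r)) * sp_alternant X m \<mu>) =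
    z ^ \<nu> m * det (mat m m (\<lambda>(i, j). \<Sum>a\<in>{\<nu> (Suc j)..\<nu> j}. z ^ (\<nu> j - a) * pow_sub_inv (a + m - j) (X i)))"
proof -
  let ?I = "\<lambda>j. {\<nu> (Suc j)..\<nu> j}"
  have "det (mat m m (\<lambda>(i, j). \<Sum>a\<in>?I j. z ^ (\<nu> j - a) * pow_sub_inv (a + m - j) (X i))) =
      (\<Sum>c\<in>PiE {0..<m} ?I. (\<Prod>j<m. z ^ (\<nu> j - c j)) * sp_alternant X m c)"
    by (simp add: det_mat_sum_cols det_mat_scale_cols sp_alternant_def)
  moreover have "(\<Sum>\<mu>\<in>branch_shapes (2*m) (Suc m) \<nu>. (\<Prod>r<Suc m. z ^ (\<nu> r - \<mu> r)) * sp_alternant X m \<mu>) =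
      (\<Sum>c\<in>PiE {0..<m} ?I. z ^ \<nu> m * ((\<Prod>j<m. z ^ (\<nu> j - c j)) * sp_alternant X m c))"
    unfolding branch_shapes_Suc[of "2*m" m \<nu>, OF order_refl assms] sum_branch_shapes_PiE[of m "2*m", OF le_SucI[OF order_refl]]
    by (intro sum.cong refl) (auto simp: mult_ac intro!: prod.cong sp_alternant_cong)
  ultimately show ?thesis by (simp add: sum_distrib_left)
qed

lemma inner_det_telescope:
  fixes X :: "nat \<Rightarrow> 'a::field"
  assumes X: "\<And>i. i < m \<Longrightarrow> X i \<noteq> 0" and z: "z \<noteq> 0" and mono: "\<And>j. j < m \<Longrightarrow> \<nu> (Suc j) \<le> \<nu> j"
  shows "(\<Prod>i<m. X i + inverse (X i) - z - inverse z) *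
      det (mat m m (\<lambda>(i, j). \<Sum>a\<in>{\<nu> (Suc j)..\<nu> j}. z ^ (\<nu> j - a) * pow_sub_inv (a + m - j) (X i))) =
    det (mat m m (\<lambda>(i, j). pow_sub_inv_shift z (\<nu> j + m - j) (X i) -
      z ^ Suc (\<nu> j - \<nu> (Suc j)) * pow_sub_inv_shift z (\<nu> (Suc j) + m - Suc j) (X i)))"
  unfolding det_mat_scale_rows[symmetric]
proof (rule det_mat_cong, clarify)
  fix i j assume i: "i < m" and j: "j < m"
  let ?\<phi> = "\<lambda>a. pow_sub_inv_shift z (a + m - Suc j) (X i)"
  have "(X i + inverse (X i) - z - inverse z) * (\<Sum>a\<in>{\<nu> (Suc j)..\<nu> j}. z ^ (\<nu> j - a) * pow_sub_inv (a + m - j) (X i)) =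
      (\<Sum>a\<in>{\<nu> (Suc j)..\<nu> j}. z ^ (\<nu> j - a) * (?\<phi> (Suc a) - z * ?\<phi> a))"
    unfolding sum_distrib_left
  proof (rule sum.cong[OF refl])
    fix a
    have "a + m - j = Suc (a + m - Suc j)" and "Suc a + m - Suc j = Suc (a + m - Suc j)" using j by auto
    then show "(X i + inverse (X i) - z - inverse z) * (z ^ (\<nu> j - a) * pow_sub_inv (a + m - j) (X i)) =
        z ^ (\<nu> j - a) * (?\<phi> (Suc a) - z * ?\<phi> a)"
      using pow_sub_inv_step[OF X[OF i] z] by (simp add: mult_ac)
  qed
  also have "\<dots> = ?\<phi> (Suc (\<nu> j)) - z ^ Suc (\<nu> j - \<nu> (Suc j)) * ?\<phi> (\<nu> (Suc j))"
    by (rule sum_telescope_geometric) (rule mono[OF j])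
  also have "Suc (\<nu> j) + m - Suc j = \<nu> j + m - j" by simp
  finally show "(X i + inverse (X i) - z - inverse z) *
      (\<Sum>a\<in>{\<nu> (Suc j)..\<nu> j}. z ^ (\<nu> j - a) * pow_sub_inv (a + m - j) (X i)) =
    pow_sub_inv_shift z (\<nu> j + m - j) (X i) -
      z ^ Suc (\<nu> j - \<nu> (Suc j)) * pow_sub_inv_shift z (\<nu> (Suc j) + m - Suc j) (X i)" .
qed

lemma bordered_det:
  fixes X :: "nat \<Rightarrow> 'a::field"
  assumes z: "z \<noteq> 0" and Xm: "X m = z" and mono: "\<And>j. j < m \<Longrightarrow> \<nu> (Suc j) \<le> \<nu> j"
  shows "(z - inverse z) * z ^ \<nu> m * det (mat m m (\<lambda>(i, j). pow_sub_inv_shift z (\<nu> j + m - j) (X i) -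
      z ^ Suc (\<nu> j - \<nu> (Suc j)) * pow_sub_inv_shift z (\<nu> (Suc j) + m - Suc j) (X i))) =
    det (mat (Suc m) (Suc m) (\<lambda>(i, j). pow_sub_inv_shift z (\<nu> j + m - j) (X i)))"
proof -
  let ?e = "\<lambda>j. z ^ (\<nu> j + m - j) * inverse z ^ \<nu> m"
  let ?a = "\<lambda>i. if i < m then 1 else (z - inverse z) * z ^ \<nu> m"
  have e_step: "?e j = z ^ Suc (\<nu> j - \<nu> (Suc j)) * ?e (Suc j)" if j: "j < m" for j
  proof -
    have "\<nu> j + m - j = Suc (\<nu> j - \<nu> (Suc j)) + (\<nu> (Suc j) + m - Suc j)" using j mono[OF j] by simp
    then have "z ^ (\<nu> j + m - j) = z ^ Suc (\<nu> j - \<nu> (Suc j)) * z ^ (\<nu> (Suc j) + m - Suc j)"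
      by (metis power_add)
    then show ?thesis by (metis mult.assoc)
  qed
  have "det (mat (Suc m) (Suc m) (\<lambda>(i, j). pow_sub_inv_shift z (\<nu> j + m - j) (X i))) =
      det (mat (Suc m) (Suc m) (\<lambda>(i, j). ?a i * (if i < m then pow_sub_inv_shift z (\<nu> j + m - j) (X i) else ?e j)))"
    using z Xm by (intro det_mat_cong) (auto simp: pow_sub_inv_shift_self power_inverse less_Suc_eq field_simps)
  also have "\<dots> = (z - inverse z) * z ^ \<nu> m * det (mat m m (\<lambda>(i, j). pow_sub_inv_shift z (\<nu> j + m - j) (X i) -
      z ^ Suc (\<nu> j - \<nu> (Suc j)) * pow_sub_inv_shift z (\<nu> (Suc j) + m - Suc j) (X i)))"
    unfolding det_mat_scale_rows
    by (subst det_mat_expand_last_row[of ?e, OF _ e_step]) (use z in \<open>simp_all add: power_inverse\<close>)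
  finally show ?thesis by simp
qed

lemma outer_branch_sum:
  "(\<Sum>\<nu>\<in>branch_shapes (Suc (2*m)) (Suc m) s. (\<Prod>r<Suc m. inverse z ^ (s r - \<nu> r)) *
      det (mat (Suc m) (Suc m) (\<lambda>(i, j). pow_sub_inv_shift z (\<nu> j + m - j) (X i)))) =
    det (mat (Suc m) (Suc m) (\<lambda>(i, j). \<Sum>b\<in>{s (Suc j)..s j}. inverse z ^ (s j - b) * pow_sub_inv_shift z (b + m - j) (X i)))"
proof -
  have le: "2 * Suc m \<le> Suc (Suc (2*m))" by simp
  show ?thesis
    unfolding sum_branch_shapes_PiE[OF le] det_mat_sum_cols[OF finite_atLeastAtMost] det_mat_scale_cols
    by (intro sum.cong refl arg_cong2[where f = "(*)"] prod.cong det_mat_cong) auto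
qed

lemma outer_det_eq_sp_alternant:
  fixes X :: "nat \<Rightarrow> 'a::field"
  assumes mono: "\<And>j. s (Suc j) \<le> s j" and s0: "s (Suc m) = 0"
  shows "det (mat (Suc m) (Suc m) (\<lambda>(i, j). \<Sum>b\<in>{s (Suc j)..s j}. inverse z ^ (s j - b) * pow_sub_inv_shift z (b + m - j) (X i))) =
    sp_alternant X (Suc m) s"
proof -
  let ?M = "\<lambda>i j. pow_sub_inv (s j + Suc m - j) (X i)"
  let ?c = "\<lambda>j. inverse z ^ Suc (s j - s (Suc j))"
  have "det (mat (Suc m) (Suc m) (\<lambda>(i, j). \<Sum>b\<in>{s (Suc j)..s j}. inverse z ^ (s j - b) * pow_sub_inv_shift z (b + m - j) (X i))) =
      det (mat (Suc m) (Suc m) (\<lambda>(i, j). ?M i j - (if Suc j < Suc m then ?c j * ?M i (Suc j) else 0)))"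
  proof (rule det_mat_cong, clarify)
    fix i j assume j: "j < Suc m"
    let ?\<phi> = "\<lambda>b. pow_sub_inv (b + m - j) (X i)"
    have "(\<Sum>b\<in>{s (Suc j)..s j}. inverse z ^ (s j - b) * pow_sub_inv_shift z (b + m - j) (X i)) =
        (\<Sum>b\<in>{s (Suc j)..s j}. inverse z ^ (s j - b) * (?\<phi> (Suc b) - inverse z * ?\<phi> b))"
      using j by (intro sum.cong refl) (simp add: pow_sub_inv_shift_def Suc_diff_le)
    also have "\<dots> = ?\<phi> (Suc (s j)) - ?c j * ?\<phi> (s (Suc j))"
      by (rule sum_telescope_geometric) (rule mono)
    also have "\<dots> = ?M i j - (if Suc j < Suc m then ?c j * ?M i (Suc j) else 0)"
      using j s0 by (auto simp: Suc_diff_le less_Suc_eq)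
    finally show "(\<Sum>b\<in>{s (Suc j)..s j}. inverse z ^ (s j - b) * pow_sub_inv_shift z (b + m - j) (X i)) =
        ?M i j - (if Suc j < Suc m then ?c j * ?M i (Suc j) else 0)" .
  qed
  also have "\<dots> = sp_alternant X (Suc m) s"
    unfolding sp_alternant_def by (rule det_mat_sub_next_col)
  finally show ?thesis .
qed

lemma inner_branch_sum_bordered:
  fixes X :: "nat \<Rightarrow> 'a::field"
  assumes X: "\<And>i. i < Suc m \<Longrightarrow> X i \<noteq> 0" and \<nu>: "\<nu> \<in> branch_shapes (Suc (2*m)) (Suc m) s"
  shows "(X m - inverse (X m)) * (\<Prod>i<m. X i + inverse (X i) - X m - inverse (X m)) *
      (\<Sum>\<mu>\<in>branch_shapes (2*m) (Suc m) \<nu>. (\<Prod>r<Suc m. X m ^ (\<nu> r - \<mu> r)) * sp_alternant X m \<mu>) =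
    det (mat (Suc m) (Suc m) (\<lambda>(i, j). pow_sub_inv_shift (X m) (\<nu> j + m - j) (X i)))"
proof -
  let ?z = "X m"
  have z: "?z \<noteq> 0" and X': "\<And>i. i < m \<Longrightarrow> X i \<noteq> 0" using X by simp_all
  have \<nu>0: "\<nu> (Suc m) = 0" using \<nu> by (auto simp: branch_shapes_def)
  have \<nu>_mono: "\<nu> (Suc j) \<le> \<nu> j" if "j < m" for j
    using branch_shapes_mono[OF \<nu>] .
  have "(\<Prod>i<m. X i + inverse (X i) - ?z - inverse ?z) *
      (\<Sum>\<mu>\<in>branch_shapes (2*m) (Suc m) \<nu>. (\<Prod>r<Suc m. ?z ^ (\<nu> r - \<mu> r)) * sp_alternant X m \<mu>) =
    ?z ^ \<nu> m * ((\<Prod>i<m. X i + inverse (X i) - ?z - inverse ?z) *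
      det (mat m m (\<lambda>(i, j). \<Sum>a\<in>{\<nu> (Suc j)..\<nu> j}. ?z ^ (\<nu> j - a) * pow_sub_inv (a + m - j) (X i))))"
    unfolding inner_branch_sum[of \<nu> m, OF \<nu>0] by (rule mult.left_commute)
  also have "\<dots> = ?z ^ \<nu> m * det (mat m m (\<lambda>(i, j). pow_sub_inv_shift ?z (\<nu> j + m - j) (X i) -
      ?z ^ Suc (\<nu> j - \<nu> (Suc j)) * pow_sub_inv_shift ?z (\<nu> (Suc j) + m - Suc j) (X i)))"
    by (simp only: inner_det_telescope[where X = X and z = ?z and \<nu> = \<nu> and m = m, OF X' z \<nu>_mono])
  finally show ?thesis
    using bordered_det[where X = X and z = ?z and \<nu> = \<nu> and m = m, OF z refl \<nu>_mono]
    by (simp add: mult_ac)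
qed

text \<open>The alternant counterpart of removing the letters x_m^(-1) and then x_m (0-indexed)
  from a King tableau.\<close>

theorem sp_alternant_branch:
  fixes X :: "nat \<Rightarrow> 'a::field"
  assumes X: "\<And>i. i < Suc m \<Longrightarrow> X i \<noteq> 0" and mono: "\<And>j. s (Suc j) \<le> s j"
    and s0: "\<And>r. Suc m \<le> r \<Longrightarrow> s r = 0"
  shows "sp_alternant X (Suc m) s =
    (X m - inverse (X m)) * (\<Prod>i<m. X i + inverse (X i) - X m - inverse (X m)) *
    (\<Sum>\<nu>\<in>branch_shapes (Suc (2*m)) (Suc m) s. (\<Prod>r<Suc m. inverse (X m) ^ (s r - \<nu> r)) *
       (\<Sum>\<mu>\<in>branch_shapes (2*m) (Suc m) \<nu>. (\<Prod>r<Suc m. X m ^ (\<nu> r - \<mu> r)) * sp_alternant X m \<mu>))"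
proof -
  let ?z = "X m"
  have "sp_alternant X (Suc m) s =
      (\<Sum>\<nu>\<in>branch_shapes (Suc (2*m)) (Suc m) s. (\<Prod>r<Suc m. inverse ?z ^ (s r - \<nu> r)) *
        det (mat (Suc m) (Suc m) (\<lambda>(i, j). pow_sub_inv_shift ?z (\<nu> j + m - j) (X i))))"
    unfolding outer_branch_sum outer_det_eq_sp_alternant[where s = s, OF mono s0[OF order_refl]] ..
  also have "\<dots> = (\<Sum>\<nu>\<in>branch_shapes (Suc (2*m)) (Suc m) s. (\<Prod>r<Suc m. inverse ?z ^ (s r - \<nu> r)) *
      ((?z - inverse ?z) * (\<Prod>i<m. X i + inverse (X i) - ?z - inverse ?z) *
        (\<Sum>\<mu>\<in>branch_shapes (2*m) (Suc m) \<nu>. (\<Prod>r<Suc m. ?z ^ (\<nu> r - \<mu> r)) * sp_alternant X m \<mu>)))"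
  proof (rule sum.cong[OF refl])
    fix \<nu> assume \<nu>: "\<nu> \<in> branch_shapes (Suc (2*m)) (Suc m) s"
    show "(\<Prod>r<Suc m. inverse ?z ^ (s r - \<nu> r)) *
        det (mat (Suc m) (Suc m) (\<lambda>(i, j). pow_sub_inv_shift ?z (\<nu> j + m - j) (X i))) =
      (\<Prod>r<Suc m. inverse ?z ^ (s r - \<nu> r)) *
        ((?z - inverse ?z) * (\<Prod>i<m. X i + inverse (X i) - ?z - inverse ?z) *
          (\<Sum>\<mu>\<in>branch_shapes (2*m) (Suc m) \<nu>. (\<Prod>r<Suc m. ?z ^ (\<nu> r - \<mu> r)) * sp_alternant X m \<mu>))"
      by (simp only: inner_branch_sum_bordered[where X = X and m = m, OF X \<nu>])
  qed
  finally show ?thesis by (simp add: sum_distrib_left mult_ac)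
qed

subsection \<open>Cutting a tableau along its rows\<close>

definition shape_cells :: "nat \<Rightarrow> (nat \<Rightarrow> nat) \<Rightarrow> (nat \<times> nat) set" where
  "shape_cells n s = (SIGMA r:{..<n}. {..<s r})"

lemma mem_shape_cells [simp]: "(r, c) \<in> shape_cells n s \<longleftrightarrow> r < n \<and> c < s r"
  by (auto simp: shape_cells_def)

lemma finite_shape_cells [simp]: "finite (shape_cells n s)"
  by (simp add: shape_cells_def)

lemma finite_bounded_shapes:
  fixes s :: "nat \<Rightarrow> nat"
  shows "finite {\<mu>. (\<forall>r<n. \<mu> r \<le> s r) \<and> (\<forall>r. n \<le> r \<longrightarrow> \<mu> r = 0)}"
proof (rule finite_subset)
  show "{\<mu>. (\<forall>r<n. \<mu> r \<le> s r) \<and> (\<forall>r. n \<le> r \<longrightarrow> \<mu> r = 0)} \<subseteq>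
      (\<lambda>c r. if r < n then c r else 0) ` PiE {..<n} (\<lambda>r. {..s r})"
  proof
    fix \<mu> assume \<mu>: "\<mu> \<in> {\<mu>. (\<forall>r<n. \<mu> r \<le> s r) \<and> (\<forall>r. n \<le> r \<longrightarrow> \<mu> r = 0)}"
    then have "\<mu> = (\<lambda>r. if r < n then restrict \<mu> {..<n} r else 0)" by (auto simp: fun_eq_iff)
    moreover have "restrict \<mu> {..<n} \<in> PiE {..<n} (\<lambda>r. {..s r})" using \<mu> by auto
    ultimately show "\<mu> \<in> (\<lambda>c r. if r < n then c r else 0) ` PiE {..<n} (\<lambda>r. {..s r})" by blast
  qed
qed (simp add: finite_PiE)

lemma finite_branch_shapes [simp]: "finite (branch_shapes K n s)"
  by (rule finite_subset[OF _ finite_bounded_shapes[of n s]]) (auto simp: branch_shapes_def)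

text \<open>The number of entries below K in row r, when that row weakly increases.\<close>

definition row_cut :: "nat \<Rightarrow> nat \<Rightarrow> (nat \<Rightarrow> nat) \<Rightarrow> (nat \<times> nat \<Rightarrow> nat) \<Rightarrow> nat \<Rightarrow> nat" where
  "row_cut K n s T r = (if r < n then LEAST c. c = s r \<or> K \<le> T (r, c) else 0)"

lemma row_cut_le: "r < n \<Longrightarrow> row_cut K n s T r \<le> s r"
  by (auto simp: row_cut_def intro: Least_le)

lemma row_cut_eq_0 [simp]: "n \<le> r \<Longrightarrow> row_cut K n s T r = 0"
  by (simp add: row_cut_def)

lemma bounded_row_mono:
  fixes f :: "nat \<Rightarrow> 'a::order"
  assumes "\<And>c. Suc c < b \<Longrightarrow> f c \<le> f (Suc c)" and "c \<le> c'" and "c' < b"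
  shows "f c \<le> f c'"
  using assms(2,3)
proof (induction c')
  case (Suc c')
  then show ?case by (cases "c = Suc c'") (auto intro: order_trans assms(1))
qed simp

lemma less_row_cut_iff:
  assumes row_mono: "\<And>r c. r < n \<Longrightarrow> Suc c < s r \<Longrightarrow> T (r, c) \<le> T (r, Suc c)"
    and r: "r < n" and c: "c < s r"
  shows "c < row_cut K n s T r \<longleftrightarrow> T (r, c) < K"
proof
  assume "c < row_cut K n s T r"
  then show "T (r, c) < K"
    using r not_less_Least[of c "\<lambda>c. c = s r \<or> K \<le> T (r, c)"] by (simp add: row_cut_def)
next
  assume small: "T (r, c) < K"
  show "c < row_cut K n s T r"
  proof (rule ccontr)
    let ?k = "row_cut K n s T r"
    assume "\<not> c < ?k"
    then have "?k \<le> c" by simp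
    moreover have "?k = s r \<or> K \<le> T (r, ?k)"
      using r LeastI[of "\<lambda>c. c = s r \<or> K \<le> T (r, c)" "s r"] by (simp add: row_cut_def)
    ultimately have "K \<le> T (r, ?k)" using c by auto
    also have "T (r, ?k) \<le> T (r, c)"
      by (rule bounded_row_mono[where f = "\<lambda>c. T (r, c)", OF row_mono[OF r]]) (use \<open>?k \<le> c\<close> c in auto)
    finally show False using small by simp
  qed
qed

lemma row_cut_eq_iff:
  assumes row_mono: "\<And>r c. r < n \<Longrightarrow> Suc c < s r \<Longrightarrow> T (r, c) \<le> T (r, Suc c)"
    and \<mu>_le: "\<And>r. r < n \<Longrightarrow> \<mu> r \<le> s r" and \<mu>0: "\<And>r. n \<le> r \<Longrightarrow> \<mu> r = 0"
  shows "row_cut K n s T = \<mu> \<longleftrightarrow> (\<forall>r<n. \<forall>c<s r. T (r, c) < K \<longleftrightarrow> c < \<mu> r)"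
proof
  assume "row_cut K n s T = \<mu>"
  then show "\<forall>r<n. \<forall>c<s r. T (r, c) < K \<longleftrightarrow> c < \<mu> r"
    using less_row_cut_iff[OF row_mono] by blast
next
  assume cut: "\<forall>r<n. \<forall>c<s r. T (r, c) < K \<longleftrightarrow> c < \<mu> r"
  show "row_cut K n s T = \<mu>"
  proof
    fix r
    show "row_cut K n s T r = \<mu> r"
    proof (cases "r < n")
      case True
      then have "\<forall>c<s r. c < row_cut K n s T r \<longleftrightarrow> c < \<mu> r"
        using cut less_row_cut_iff[OF row_mono] by blast
      then show ?thesis
        using row_cut_le[OF True] \<mu>_le[OF True] by (metis linorder_neqE_nat order.strict_trans2 less_irrefl)
    qed (simp add: \<mu>0)
  qed
qed

text \<open>Inverse to restriction to the cells of \<mu>, on tableaux whose other entries all equal K.\<close>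

definition pad_tableau :: "nat \<Rightarrow> nat \<Rightarrow> (nat \<Rightarrow> nat) \<Rightarrow> (nat \<Rightarrow> nat) \<Rightarrow> (nat \<times> nat \<Rightarrow> nat) \<Rightarrow> nat \<times> nat \<Rightarrow> nat" where
  "pad_tableau K n s \<mu> T p =
     (if p \<in> shape_cells n s then if p \<in> shape_cells n \<mu> then T p else K else undefined)"

lemma sum_row_cut_fiber:
  assumes \<mu>_le: "\<And>r. r < n \<Longrightarrow> \<mu> r \<le> s r"
    and A: "A \<subseteq> shape_cells n s \<rightarrow>\<^sub>E {..K}" and B: "B \<subseteq> shape_cells n \<mu> \<rightarrow>\<^sub>E {..<K}"
    and restrict_B: "\<And>T. T \<in> A \<Longrightarrow> \<forall>r<n. \<forall>c<s r. T (r, c) < K \<longleftrightarrow> c < \<mu> r \<Longrightarrow>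
                          restrict T (shape_cells n \<mu>) \<in> B"
    and pad_A: "\<And>T'. T' \<in> B \<Longrightarrow> pad_tableau K n s \<mu> T' \<in> A"
  shows "sum f {T \<in> A. \<forall>r<n. \<forall>c<s r. T (r, c) < K \<longleftrightarrow> c < \<mu> r} = sum (f \<circ> pad_tableau K n s \<mu>) B"
proof -
  have sub: "shape_cells n \<mu> \<subseteq> shape_cells n s"
    by (auto intro: less_le_trans[OF _ \<mu>_le])
  have pad_restrict: "pad_tableau K n s \<mu> (restrict T (shape_cells n \<mu>)) = T"
    if T: "T \<in> A" and cut: "\<forall>r<n. \<forall>c<s r. T (r, c) < K \<longleftrightarrow> c < \<mu> r" for T
  proof
    fix p
    have "T \<in> shape_cells n s \<rightarrow>\<^sub>E {..K}" using T A by blast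
    then show "pad_tableau K n s \<mu> (restrict T (shape_cells n \<mu>)) p = T p"
      using cut by (cases p) (force simp: pad_tableau_def PiE_def Pi_def extensional_def)
  qed
  show ?thesis
  proof (rule sum.reindex_bij_witness[where i = "pad_tableau K n s \<mu>" and j = "\<lambda>T. restrict T (shape_cells n \<mu>)"])
    fix T' assume "T' \<in> B"
    then have T': "T' \<in> shape_cells n \<mu> \<rightarrow>\<^sub>E {..<K}" using B by blast
    show "restrict (pad_tableau K n s \<mu> T') (shape_cells n \<mu>) = T'"
    proof
      fix p
      show "restrict (pad_tableau K n s \<mu> T') (shape_cells n \<mu>) p = T' p"
        using sub PiE_arb[OF T'] by (cases "p \<in> shape_cells n \<mu>") (auto simp: pad_tableau_def)
    qed
    show "pad_tableau K n s \<mu> T' \<in> {T \<in> A. \<forall>r<n. \<forall>c<s r. T (r, c) < K \<longleftrightarrow> c < \<mu> r}"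
      using pad_A[OF \<open>T' \<in> B\<close>] T' by (auto simp: pad_tableau_def)
  qed (auto simp: pad_restrict restrict_B)
qed

definition tableau_weight :: "(nat \<Rightarrow> 'a::comm_monoid_mult) \<Rightarrow> nat \<Rightarrow> (nat \<Rightarrow> nat) \<Rightarrow> (nat \<times> nat \<Rightarrow> nat) \<Rightarrow> 'a" where
  "tableau_weight g n s T = (\<Prod>r<n. \<Prod>c<s r. g (T (r, c)))"

lemma tableau_weight_pad:
  assumes "\<And>r. r < n \<Longrightarrow> \<mu> r \<le> s r"
  shows "tableau_weight g n s (pad_tableau K n s \<mu> T) = (\<Prod>r<n. g K ^ (s r - \<mu> r)) * tableau_weight g n \<mu> T"
proof -
  have "(\<Prod>c<s r. g (pad_tableau K n s \<mu> T (r, c))) = (\<Prod>c<\<mu> r. g (T (r, c))) * g K ^ (s r - \<mu> r)"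
    if r: "r < n" for r
  proof -
    have "(\<Prod>c<s r. g (pad_tableau K n s \<mu> T (r, c))) =
        (\<Prod>c<\<mu> r. g (pad_tableau K n s \<mu> T (r, c))) * (\<Prod>c\<in>{\<mu> r..<s r}. g (pad_tableau K n s \<mu> T (r, c)))"
      using assms[OF r] by (simp add: prod.atLeastLessThan_concat lessThan_atLeast0)
    also have "\<dots> = (\<Prod>c<\<mu> r. g (T (r, c))) * g K ^ (s r - \<mu> r)"
      using r assms[OF r] by (simp add: pad_tableau_def)
    finally show ?thesis .
  qed
  then show ?thesis by (simp add: tableau_weight_def prod.distrib mult_ac)
qed

subsection \<open>King tableaux\<close>

text \<open>Symplectic (King) tableaux of shape s with letters 0, ..., K-1, where 2i encodes i+1 and
  2i+1 encodes its bar.\<close>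

definition king_tableaux :: "nat \<Rightarrow> nat \<Rightarrow> (nat \<Rightarrow> nat) \<Rightarrow> (nat \<times> nat \<Rightarrow> nat) set" where
  "king_tableaux K n s = {T. T \<in> shape_cells n s \<rightarrow>\<^sub>E {..<K} \<and>
     (\<forall>r c. (r, c) \<in> shape_cells n s \<and> (r, Suc c) \<in> shape_cells n s \<longrightarrow> T (r, c) \<le> T (r, Suc c)) \<and>
     (\<forall>r c. (r, c) \<in> shape_cells n s \<and> (Suc r, c) \<in> shape_cells n s \<longrightarrow> T (r, c) < T (Suc r, c)) \<and>
     (\<forall>r c. (r, c) \<in> shape_cells n s \<longrightarrow> 2*r \<le> T (r, c))}"

definition letter_weight :: "(nat \<Rightarrow> 'a::field) \<Rightarrow> nat \<Rightarrow> 'a" where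
  "letter_weight X k = (if even k then X (k div 2) else inverse (X (k div 2)))"

definition king_sum :: "(nat \<Rightarrow> 'a::field) \<Rightarrow> nat \<Rightarrow> nat \<Rightarrow> (nat \<Rightarrow> nat) \<Rightarrow> 'a" where
  "king_sum X K n s = (\<Sum>T\<in>king_tableaux K n s. tableau_weight (letter_weight X) n s T)"

lemma king_tableaux_less: "T \<in> king_tableaux K n s \<Longrightarrow> r < n \<Longrightarrow> c < s r \<Longrightarrow> T (r, c) < K"
  unfolding king_tableaux_def using PiE_mem[of T "shape_cells n s" "\<lambda>_. {..<K}" "(r, c)"] by auto

lemma king_tableaux_row_mono:
  "T \<in> king_tableaux K n s \<Longrightarrow> r < n \<Longrightarrow> Suc c < s r \<Longrightarrow> T (r, c) \<le> T (r, Suc c)"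
  by (auto simp: king_tableaux_def)

lemma finite_king_tableaux [simp]: "finite (king_tableaux K n s)"
  by (rule finite_subset[of _ "shape_cells n s \<rightarrow>\<^sub>E {..<K}"]) (auto simp: king_tableaux_def finite_PiE)

lemma king_sum_0: "king_sum X 0 0 s = 1"
proof -
  have "king_tableaux 0 0 s = {\<lambda>_. undefined}"
    by (auto simp: king_tableaux_def shape_cells_def)
  then show ?thesis by (simp add: king_sum_def tableau_weight_def)
qed

lemma king_sum_Suc_rows:
  assumes "s m = 0"
  shows "king_sum X K (Suc m) s = king_sum X K m s"
proof -
  have "shape_cells (Suc m) s = shape_cells m s"
    using assms by (auto simp: shape_cells_def less_Suc_eq)
  then show ?thesis using assms by (simp add: king_sum_def king_tableaux_def tableau_weight_def)
qed

lemma row_cut_mem_branch_shapes: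
  assumes T: "T \<in> king_tableaux (Suc K) n s"
    and mono: "\<And>r. s (Suc r) \<le> s r" and s0: "\<And>r. n \<le> r \<Longrightarrow> s r = 0"
  shows "row_cut K n s T \<in> branch_shapes K n s"
proof -
  let ?\<mu> = "row_cut K n s T"
  have cut: "c < ?\<mu> r \<longleftrightarrow> T (r, c) < K" if "r < n" "c < s r" for r c
    by (rule less_row_cut_iff[where T = T and n = n and s = s, OF king_tableaux_row_mono[OF T] that])
  have strip: "s (Suc r) \<le> ?\<mu> r" if r: "r < n" for r
  proof (rule ccontr)
    assume "\<not> s (Suc r) \<le> ?\<mu> r"
    then have c1: "?\<mu> r < s (Suc r)" by simp
    with mono[of r] have c2: "?\<mu> r < s r" by simp
    from c1 have r1: "Suc r < n" using s0[of "Suc r"] by (cases "Suc r < n") auto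
    have "T (r, ?\<mu> r) < T (Suc r, ?\<mu> r)" using T r1 c1 c2 by (auto simp: king_tableaux_def)
    also have "T (Suc r, ?\<mu> r) \<le> K" using king_tableaux_less[OF T r1 c1] by simp
    finally show False using cut[OF r c2] by simp
  qed
  have flag: "?\<mu> r = 0" if r: "r < n" and "K \<le> 2*r" for r
  proof (rule ccontr)
    assume "?\<mu> r \<noteq> 0"
    then have "0 < s r" using row_cut_le[OF r, of K s T] by simp
    then have "T (r, 0) < K" and "2*r \<le> T (r, 0)"
      using cut[OF r] \<open>?\<mu> r \<noteq> 0\<close> T r by (auto simp: king_tableaux_def)
    then show False using \<open>K \<le> 2*r\<close> by simp
  qed
  show ?thesis using strip flag row_cut_le by (auto simp: branch_shapes_def)
qed

lemma restrict_mem_king_tableaux: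
  assumes T: "T \<in> king_tableaux (Suc K) n s" and \<mu>_le: "\<And>r. r < n \<Longrightarrow> \<mu> r \<le> s r"
    and cut: "\<forall>r<n. \<forall>c<s r. T (r, c) < K \<longleftrightarrow> c < \<mu> r"
  shows "restrict T (shape_cells n \<mu>) \<in> king_tableaux K n \<mu>"
proof -
  have sub: "p \<in> shape_cells n \<mu> \<Longrightarrow> p \<in> shape_cells n s" for p
    by (cases p) (auto intro: less_le_trans[OF _ \<mu>_le])
  have "T p < K" if "p \<in> shape_cells n \<mu>" for p
    using cut that sub[OF that] by (cases p) auto
  then show ?thesis using T sub by (auto simp: king_tableaux_def simp del: mem_shape_cells)
qed

lemma pad_mem_king_tableaux:
  assumes \<mu>: "\<mu> \<in> branch_shapes K n s" and T: "T \<in> king_tableaux K n \<mu>"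
    and flag: "\<And>r. r < n \<Longrightarrow> K < 2*r \<Longrightarrow> s r = 0"
  shows "pad_tableau K n s \<mu> T \<in> king_tableaux (Suc K) n s"
proof -
  have \<mu>_le: "r < n \<Longrightarrow> \<mu> r \<le> s r" and strip: "r < n \<Longrightarrow> s (Suc r) \<le> \<mu> r" for r
    using \<mu> by (auto simp: branch_shapes_def)
  have TK: "T p < K" if "p \<in> shape_cells n \<mu>" for p
    using T that by (auto simp: king_tableaux_def)
  show ?thesis
    unfolding king_tableaux_def
  proof (intro CollectI conjI allI impI)
    show "pad_tableau K n s \<mu> T \<in> shape_cells n s \<rightarrow>\<^sub>E {..<Suc K}"
      using TK by (auto simp: pad_tableau_def less_Suc_eq simp del: mem_shape_cells)
  next
    fix r c assume "(r, c) \<in> shape_cells n s \<and> (r, Suc c) \<in> shape_cells n s"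
    then show "pad_tableau K n s \<mu> T (r, c) \<le> pad_tableau K n s \<mu> T (r, Suc c)"
      using T TK[of "(r, c)"] by (auto simp: pad_tableau_def king_tableaux_def less_imp_le)
  next
    fix r c assume rc: "(r, c) \<in> shape_cells n s \<and> (Suc r, c) \<in> shape_cells n s"
    then have "(r, c) \<in> shape_cells n \<mu>" using strip[of r] by auto
    then show "pad_tableau K n s \<mu> T (r, c) < pad_tableau K n s \<mu> T (Suc r, c)"
      using rc T TK[of "(r, c)"] by (auto simp: pad_tableau_def king_tableaux_def)
  next
    fix r c assume "(r, c) \<in> shape_cells n s"
    then show "2*r \<le> pad_tableau K n s \<mu> T (r, c)"
      using T flag[of r] by (cases "K < 2*r") (auto simp: pad_tableau_def king_tableaux_def)
  qed
qed

lemma sum_king_tableaux_row_cut: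
  assumes \<mu>: "\<mu> \<in> branch_shapes K n s" and flag: "\<And>r. r < n \<Longrightarrow> K < 2*r \<Longrightarrow> s r = 0"
  shows "(\<Sum>T\<in>{T \<in> king_tableaux (Suc K) n s. row_cut K n s T = \<mu>}. tableau_weight (letter_weight X) n s T) =
    (\<Prod>r<n. letter_weight X K ^ (s r - \<mu> r)) * king_sum X K n \<mu>"
proof -
  let ?w = "tableau_weight (letter_weight X) n s" and ?A = "king_tableaux (Suc K) n s"
  have \<mu>_le: "r < n \<Longrightarrow> \<mu> r \<le> s r" and \<mu>0: "n \<le> r \<Longrightarrow> \<mu> r = 0" for r
    using \<mu> by (auto simp: branch_shapes_def)
  have "row_cut K n s T = \<mu> \<longleftrightarrow> (\<forall>r<n. \<forall>c<s r. T (r, c) < K \<longleftrightarrow> c < \<mu> r)" if "T \<in> ?A" for T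
    by (rule row_cut_eq_iff[OF king_tableaux_row_mono[OF that] \<mu>_le \<mu>0])
  then have fiber_eq: "{T \<in> ?A. row_cut K n s T = \<mu>} = {T \<in> ?A. \<forall>r<n. \<forall>c<s r. T (r, c) < K \<longleftrightarrow> c < \<mu> r}"
    by blast
  have "sum ?w {T \<in> ?A. \<forall>r<n. \<forall>c<s r. T (r, c) < K \<longleftrightarrow> c < \<mu> r} =
      sum (?w \<circ> pad_tableau K n s \<mu>) (king_tableaux K n \<mu>)"
  proof (rule sum_row_cut_fiber[OF \<mu>_le])
    show "?A \<subseteq> shape_cells n s \<rightarrow>\<^sub>E {..K}"
      by (auto simp: king_tableaux_def lessThan_Suc_atMost)
    show "king_tableaux K n \<mu> \<subseteq> shape_cells n \<mu> \<rightarrow>\<^sub>E {..<K}"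
      by (auto simp: king_tableaux_def)
  next
    fix T assume T: "T \<in> ?A" and cut: "\<forall>r<n. \<forall>c<s r. T (r, c) < K \<longleftrightarrow> c < \<mu> r"
    show "restrict T (shape_cells n \<mu>) \<in> king_tableaux K n \<mu>"
      by (rule restrict_mem_king_tableaux[OF T \<mu>_le cut])
  next
    fix T' assume "T' \<in> king_tableaux K n \<mu>"
    then show "pad_tableau K n s \<mu> T' \<in> ?A"
      by (rule pad_mem_king_tableaux[OF \<mu> _ flag])
  qed
  also have "\<dots> = (\<Sum>T\<in>king_tableaux K n \<mu>.
      (\<Prod>r<n. letter_weight X K ^ (s r - \<mu> r)) * tableau_weight (letter_weight X) n \<mu> T)"
    by (rule sum.cong[OF refl]) (simp only: comp_apply tableau_weight_pad[OF \<mu>_le])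
  finally show ?thesis
    by (simp only: fiber_eq king_sum_def sum_distrib_left)
qed

text \<open>Deleting the largest letter K.\<close>

theorem king_sum_Suc:
  assumes mono: "\<And>r. s (Suc r) \<le> s r" and s0: "\<And>r. n \<le> r \<Longrightarrow> s r = 0"
    and flag: "\<And>r. r < n \<Longrightarrow> K < 2*r \<Longrightarrow> s r = 0"
  shows "king_sum X (Suc K) n s =
    (\<Sum>\<mu>\<in>branch_shapes K n s. (\<Prod>r<n. letter_weight X K ^ (s r - \<mu> r)) * king_sum X K n \<mu>)"
proof -
  let ?A = "king_tableaux (Suc K) n s"
  have "king_sum X (Suc K) n s = (\<Sum>\<mu>\<in>branch_shapes K n s.
      \<Sum>T\<in>{T \<in> ?A. row_cut K n s T = \<mu>}. tableau_weight (letter_weight X) n s T)"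
    unfolding king_sum_def
  proof (rule sum.group[symmetric])
    show "row_cut K n s ` ?A \<subseteq> branch_shapes K n s"
      using row_cut_mem_branch_shapes[where s = s, OF _ mono s0] by blast
  qed simp_all
  also have "\<dots> = (\<Sum>\<mu>\<in>branch_shapes K n s. (\<Prod>r<n. letter_weight X K ^ (s r - \<mu> r)) * king_sum X K n \<mu>)"
    by (rule sum.cong[OF refl]) (erule sum_king_tableaux_row_cut[OF _ flag])
  finally show ?thesis .
qed

lemma king_sum_branch_bar:
  assumes "\<And>r. s (Suc r) \<le> s r" and "\<And>r. Suc m \<le> r \<Longrightarrow> s r = 0"
  shows "king_sum X (2 * Suc m) (Suc m) s =
    (\<Sum>\<nu>\<in>branch_shapes (Suc (2*m)) (Suc m) s. (\<Prod>r<Suc m. inverse (X m) ^ (s r - \<nu> r)) *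
       king_sum X (Suc (2*m)) (Suc m) \<nu>)"
  using king_sum_Suc[of s "Suc m" "Suc (2*m)" X] assms by (simp add: letter_weight_def)

lemma king_sum_branch_unbar:
  assumes \<nu>: "\<nu> \<in> branch_shapes (Suc (2*m)) (Suc m) s"
  shows "king_sum X (Suc (2*m)) (Suc m) \<nu> =
    (\<Sum>\<mu>\<in>branch_shapes (2*m) (Suc m) \<nu>. (\<Prod>r<Suc m. X m ^ (\<nu> r - \<mu> r)) * king_sum X (2*m) m \<mu>)"
proof -
  have "king_sum X (Suc (2*m)) (Suc m) \<nu> =
      (\<Sum>\<mu>\<in>branch_shapes (2*m) (Suc m) \<nu>. (\<Prod>r<Suc m. X m ^ (\<nu> r - \<mu> r)) * king_sum X (2*m) (Suc m) \<mu>)"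
    using king_sum_Suc[of \<nu> "Suc m" "2*m" X] branch_shapes_mono[OF \<nu>] \<nu>
    by (simp add: letter_weight_def branch_shapes_def)
  also have "\<dots> = (\<Sum>\<mu>\<in>branch_shapes (2*m) (Suc m) \<nu>. (\<Prod>r<Suc m. X m ^ (\<nu> r - \<mu> r)) * king_sum X (2*m) m \<mu>)"
    by (intro sum.cong refl) (simp add: king_sum_Suc_rows branch_shapes_def)
  finally show ?thesis .
qed

definition sp_denominator :: "(nat \<Rightarrow> 'a::field) \<Rightarrow> nat \<Rightarrow> 'a" where
  "sp_denominator X n =
     (\<Prod>i<n. X i - inverse (X i)) * (\<Prod>j<n. \<Prod>i<j. X i + inverse (X i) - X j - inverse (X j))"

lemma sp_denominator_Suc:
  "sp_denominator X (Suc m) =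
     sp_denominator X m * ((X m - inverse (X m)) * (\<Prod>i<m. X i + inverse (X i) - X m - inverse (X m)))"
  by (simp add: sp_denominator_def mult_ac)

theorem sp_denominator_mul_king_sum:
  fixes X :: "nat \<Rightarrow> 'a::field"
  assumes "\<And>i. i < n \<Longrightarrow> X i \<noteq> 0"
    and "\<And>r. s (Suc r) \<le> s r" and "\<And>r. n \<le> r \<Longrightarrow> s r = 0"
  shows "sp_denominator X n * king_sum X (2*n) n s = sp_alternant X n s"
  using assms
proof (induction n arbitrary: s)
  case 0
  then show ?case by (simp add: sp_denominator_def king_sum_0 sp_alternant_def)
next
  case (Suc m)
  let ?z = "X m"
  have IH: "sp_denominator X m * king_sum X (2*m) m \<mu> = sp_alternant X m \<mu>"
    if \<mu>: "\<mu> \<in> branch_shapes (2*m) (Suc m) \<nu>" for \<mu> \<nu>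
  proof (rule Suc.IH)
    show "\<And>i. i < m \<Longrightarrow> X i \<noteq> 0" using Suc.prems(1) by simp
    show "\<mu> (Suc r) \<le> \<mu> r" for r by (rule branch_shapes_mono[OF \<mu>])
    show "m \<le> r \<Longrightarrow> \<mu> r = 0" for r using \<mu> by (cases "r = m") (auto simp: branch_shapes_def)
  qed
  have inner: "sp_denominator X m * king_sum X (Suc (2*m)) (Suc m) \<nu> =
      (\<Sum>\<mu>\<in>branch_shapes (2*m) (Suc m) \<nu>. (\<Prod>r<Suc m. ?z ^ (\<nu> r - \<mu> r)) * sp_alternant X m \<mu>)"
    if \<nu>: "\<nu> \<in> branch_shapes (Suc (2*m)) (Suc m) s" for \<nu>
    unfolding king_sum_branch_unbar[OF \<nu>] sum_distrib_left
    by (intro sum.cong refl) (simp add: IH[of _ \<nu>, symmetric] mult_ac)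
  have bar: "king_sum X (2 * Suc m) (Suc m) s =
      (\<Sum>\<nu>\<in>branch_shapes (Suc (2*m)) (Suc m) s. (\<Prod>r<Suc m. inverse ?z ^ (s r - \<nu> r)) *
        king_sum X (Suc (2*m)) (Suc m) \<nu>)"
    by (rule king_sum_branch_bar) (use Suc.prems in auto)
  have "sp_denominator X (Suc m) * king_sum X (2 * Suc m) (Suc m) s =
      (?z - inverse ?z) * (\<Prod>i<m. X i + inverse (X i) - ?z - inverse ?z) *
      (\<Sum>\<nu>\<in>branch_shapes (Suc (2*m)) (Suc m) s. (\<Prod>r<Suc m. inverse ?z ^ (s r - \<nu> r)) *
        (sp_denominator X m * king_sum X (Suc (2*m)) (Suc m) \<nu>))"
    unfolding sp_denominator_Suc bar sum_distrib_left by (simp only: mult_ac)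
  also have "\<dots> = sp_alternant X (Suc m) s"
    by (simp only: inner cong: sum.cong)
      (rule sp_alternant_branch[where X = X and m = m and s = s, symmetric], use Suc.prems in auto)
  finally show ?case .
qed

subsection \<open>Adding one primed letter\<close>

text \<open>Orthosymplectic tableaux with a single primed letter, coded by 2n (after the letters of
  the King tableaux): it may repeat down columns but not along rows, and is exempt from the
  row bound.\<close>

definition osp_code_tableaux :: "nat \<Rightarrow> (nat \<Rightarrow> nat) \<Rightarrow> (nat \<times> nat \<Rightarrow> nat) set" where
  "osp_code_tableaux n s = {T. T \<in> shape_cells n s \<rightarrow>\<^sub>E {..2*n} \<and>
     (\<forall>r c. (r, c) \<in> shape_cells n s \<and> (r, Suc c) \<in> shape_cells n s \<longrightarrow>
        T (r, c) \<le> T (r, Suc c) \<and> \<not> (T (r, c) = 2*n \<and> T (r, Suc c) = 2*n)) \<and>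
     (\<forall>r c. (r, c) \<in> shape_cells n s \<and> (Suc r, c) \<in> shape_cells n s \<longrightarrow>
        T (r, c) \<le> T (Suc r, c) \<and> (T (Suc r, c) < 2*n \<longrightarrow> T (r, c) < T (Suc r, c))) \<and>
     (\<forall>r c. (r, c) \<in> shape_cells n s \<and> T (r, c) < 2*n \<longrightarrow> 2*r \<le> T (r, c))}"

definition osp_letter_weight :: "(nat \<Rightarrow> 'a::field) \<Rightarrow> 'a \<Rightarrow> nat \<Rightarrow> nat \<Rightarrow> 'a" where
  "osp_letter_weight X y n k = (if k = 2*n then y else letter_weight X k)"

definition vertical_strips :: "nat \<Rightarrow> (nat \<Rightarrow> nat) \<Rightarrow> (nat \<Rightarrow> nat) set" where
  "vertical_strips n s =
     {\<nu>. (\<forall>r<n. \<nu> r \<le> s r \<and> s r \<le> Suc (\<nu> r) \<and> \<nu> (Suc r) \<le> \<nu> r) \<and> (\<forall>r. n \<le> r \<longrightarrow> \<nu> r = 0)}"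

lemma osp_code_tableaux_le: "T \<in> osp_code_tableaux n s \<Longrightarrow> r < n \<Longrightarrow> c < s r \<Longrightarrow> T (r, c) \<le> 2*n"
  unfolding osp_code_tableaux_def using PiE_mem[of T "shape_cells n s" "\<lambda>_. {..2*n}" "(r, c)"] by auto

lemma osp_code_tableaux_row_mono:
  "T \<in> osp_code_tableaux n s \<Longrightarrow> r < n \<Longrightarrow> Suc c < s r \<Longrightarrow> T (r, c) \<le> T (r, Suc c)"
  by (auto simp: osp_code_tableaux_def)

lemma vertical_strips_mono: "\<nu> \<in> vertical_strips n s \<Longrightarrow> \<nu> (Suc r) \<le> \<nu> r"
  unfolding vertical_strips_def by (cases "r < n") auto

lemma finite_osp_code_tableaux [simp]: "finite (osp_code_tableaux n s)"
  by (rule finite_subset[of _ "shape_cells n s \<rightarrow>\<^sub>E {..2*n}"]) (auto simp: osp_code_tableaux_def finite_PiE)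

lemma finite_vertical_strips [simp]: "finite (vertical_strips n s)"
  by (rule finite_subset[OF _ finite_bounded_shapes[of n s]]) (auto simp: vertical_strips_def)

lemma row_cut_mem_vertical_strips:
  assumes T: "T \<in> osp_code_tableaux n s" and mono: "\<And>r. s (Suc r) \<le> s r"
  shows "row_cut (2*n) n s T \<in> vertical_strips n s"
proof -
  let ?\<nu> = "row_cut (2*n) n s T"
  have cut: "c < ?\<nu> r \<longleftrightarrow> T (r, c) < 2*n" if "r < n" "c < s r" for r c
    by (rule less_row_cut_iff[where T = T and n = n and s = s, OF osp_code_tableaux_row_mono[OF T] that])
  have strip: "s r \<le> Suc (?\<nu> r)" if r: "r < n" for r
  proof (rule ccontr)
    assume "\<not> s r \<le> Suc (?\<nu> r)"
    then have c: "?\<nu> r < s r" "Suc (?\<nu> r) < s r" by auto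
    then have "T (r, ?\<nu> r) = 2*n" "T (r, Suc (?\<nu> r)) = 2*n"
      using cut[OF r c(1)] cut[OF r c(2)] osp_code_tableaux_le[OF T r c(1)] osp_code_tableaux_le[OF T r c(2)]
      by auto
    then show False using T r c by (auto simp: osp_code_tableaux_def)
  qed
  have mono_\<nu>: "?\<nu> (Suc r) \<le> ?\<nu> r" if r: "r < n" for r
  proof (rule ccontr)
    assume "\<not> ?\<nu> (Suc r) \<le> ?\<nu> r"
    then have c1: "?\<nu> r < ?\<nu> (Suc r)" by simp
    then have r1: "Suc r < n" by (cases "Suc r < n") auto
    have c2: "?\<nu> r < s (Suc r)" using c1 row_cut_le[OF r1, of "2*n" s T] by simp
    have c3: "?\<nu> r < s r" using c2 mono[of r] by simp
    have "T (Suc r, ?\<nu> r) < 2*n" using cut[OF r1 c2] c1 by simp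
    moreover have "T (r, ?\<nu> r) \<le> T (Suc r, ?\<nu> r)"
      using T r1 c2 c3 by (auto simp: osp_code_tableaux_def)
    ultimately have "T (r, ?\<nu> r) < 2*n" by simp
    then show False using cut[OF r c3] by simp
  qed
  show ?thesis using strip mono_\<nu> row_cut_le by (auto simp: vertical_strips_def)
qed

lemma restrict_osp_code_mem_king_tableaux:
  assumes T: "T \<in> osp_code_tableaux n s" and \<nu>_le: "\<And>r. r < n \<Longrightarrow> \<nu> r \<le> s r"
    and cut: "\<forall>r<n. \<forall>c<s r. T (r, c) < 2*n \<longleftrightarrow> c < \<nu> r"
  shows "restrict T (shape_cells n \<nu>) \<in> king_tableaux (2*n) n \<nu>"
proof -
  have sub: "p \<in> shape_cells n \<nu> \<Longrightarrow> p \<in> shape_cells n s" for p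
    by (cases p) (auto intro: less_le_trans[OF _ \<nu>_le])
  have small: "T p < 2*n" if "p \<in> shape_cells n \<nu>" for p
    using cut that sub[OF that] by (cases p) auto
  show ?thesis
    unfolding king_tableaux_def
  proof (intro CollectI conjI allI impI)
    show "restrict T (shape_cells n \<nu>) \<in> shape_cells n \<nu> \<rightarrow>\<^sub>E {..<2*n}" using small by auto
  next
    fix r c assume "(r, c) \<in> shape_cells n \<nu> \<and> (Suc r, c) \<in> shape_cells n \<nu>"
    then show "restrict T (shape_cells n \<nu>) (r, c) < restrict T (shape_cells n \<nu>) (Suc r, c)"
      using T sub small[of "(Suc r, c)"] by (auto simp: osp_code_tableaux_def simp del: mem_shape_cells)
  qed (use T sub small in \<open>auto simp: osp_code_tableaux_def simp del: mem_shape_cells\<close>)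
qed

lemma pad_mem_osp_code_tableaux:
  assumes \<nu>: "\<nu> \<in> vertical_strips n s" and T: "T \<in> king_tableaux (2*n) n \<nu>"
  shows "pad_tableau (2*n) n s \<nu> T \<in> osp_code_tableaux n s"
proof -
  have \<nu>_le: "r < n \<Longrightarrow> \<nu> r \<le> s r" and strip: "r < n \<Longrightarrow> s r \<le> Suc (\<nu> r)"
    and \<nu>_mono: "r < n \<Longrightarrow> \<nu> (Suc r) \<le> \<nu> r" for r
    using \<nu> by (auto simp: vertical_strips_def)
  have small: "T p < 2*n" if "p \<in> shape_cells n \<nu>" for p
    using T that by (auto simp: king_tableaux_def)
  show ?thesis
    unfolding osp_code_tableaux_def
  proof (intro CollectI conjI allI impI)
    show "pad_tableau (2*n) n s \<nu> T \<in> shape_cells n s \<rightarrow>\<^sub>E {..2*n}"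
      using small by (auto simp: pad_tableau_def less_imp_le simp del: mem_shape_cells)
  next
    fix r c assume rc: "(r, c) \<in> shape_cells n s \<and> (r, Suc c) \<in> shape_cells n s"
    then show "pad_tableau (2*n) n s \<nu> T (r, c) \<le> pad_tableau (2*n) n s \<nu> T (r, Suc c)"
      using T small[of "(r, c)"] by (auto simp: pad_tableau_def king_tableaux_def less_imp_le)
    show "\<not> (pad_tableau (2*n) n s \<nu> T (r, c) = 2*n \<and> pad_tableau (2*n) n s \<nu> T (r, Suc c) = 2*n)"
      using rc strip[of r] small[of "(r, c)"] by (auto simp: pad_tableau_def)
  next
    fix r c assume rc: "(r, c) \<in> shape_cells n s \<and> (Suc r, c) \<in> shape_cells n s"
    show "pad_tableau (2*n) n s \<nu> T (r, c) \<le> pad_tableau (2*n) n s \<nu> T (Suc r, c)"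
      using rc T small[of "(r, c)"] \<nu>_mono[of r] by (auto simp: pad_tableau_def king_tableaux_def less_imp_le)
    show "pad_tableau (2*n) n s \<nu> T (r, c) < pad_tableau (2*n) n s \<nu> T (Suc r, c)"
      if "pad_tableau (2*n) n s \<nu> T (Suc r, c) < 2*n"
      using that rc T small[of "(r, c)"] \<nu>_mono[of r] by (auto simp: pad_tableau_def king_tableaux_def split: if_splits)
  next
    fix r c assume "(r, c) \<in> shape_cells n s \<and> pad_tableau (2*n) n s \<nu> T (r, c) < 2*n"
    then show "2*r \<le> pad_tableau (2*n) n s \<nu> T (r, c)"
      using T by (auto simp: pad_tableau_def king_tableaux_def split: if_splits)
  qed
qed

lemma tableau_weight_osp_letter_weight:
  assumes "T \<in> king_tableaux (2*n) n \<nu>"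
  shows "tableau_weight (osp_letter_weight X y n) n \<nu> T = tableau_weight (letter_weight X) n \<nu> T"
proof -
  have "osp_letter_weight X y n (T (r, c)) = letter_weight X (T (r, c))" if "r < n" "c < \<nu> r" for r c
    using king_tableaux_less[OF assms that] by (simp add: osp_letter_weight_def)
  then show ?thesis by (auto simp: tableau_weight_def intro!: prod.cong)
qed

lemma sum_osp_code_tableaux_row_cut:
  assumes \<nu>: "\<nu> \<in> vertical_strips n s"
  shows "(\<Sum>T\<in>{T \<in> osp_code_tableaux n s. row_cut (2*n) n s T = \<nu>}. tableau_weight (osp_letter_weight X y n) n s T) =
    (\<Prod>r<n. y ^ (s r - \<nu> r)) * king_sum X (2*n) n \<nu>"
proof -
  let ?w = "tableau_weight (osp_letter_weight X y n) n s" and ?A = "osp_code_tableaux n s"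
  have \<nu>_le: "r < n \<Longrightarrow> \<nu> r \<le> s r" and \<nu>0: "n \<le> r \<Longrightarrow> \<nu> r = 0" for r
    using \<nu> by (auto simp: vertical_strips_def)
  have "row_cut (2*n) n s T = \<nu> \<longleftrightarrow> (\<forall>r<n. \<forall>c<s r. T (r, c) < 2*n \<longleftrightarrow> c < \<nu> r)" if "T \<in> ?A" for T
    by (rule row_cut_eq_iff[OF osp_code_tableaux_row_mono[OF that] \<nu>_le \<nu>0])
  then have fiber_eq: "{T \<in> ?A. row_cut (2*n) n s T = \<nu>} =
      {T \<in> ?A. \<forall>r<n. \<forall>c<s r. T (r, c) < 2*n \<longleftrightarrow> c < \<nu> r}"
    by blast
  have "sum ?w {T \<in> ?A. \<forall>r<n. \<forall>c<s r. T (r, c) < 2*n \<longleftrightarrow> c < \<nu> r} =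
      sum (?w \<circ> pad_tableau (2*n) n s \<nu>) (king_tableaux (2*n) n \<nu>)"
  proof (rule sum_row_cut_fiber[OF \<nu>_le])
    show "?A \<subseteq> shape_cells n s \<rightarrow>\<^sub>E {..2*n}"
      by (auto simp: osp_code_tableaux_def)
    show "king_tableaux (2*n) n \<nu> \<subseteq> shape_cells n \<nu> \<rightarrow>\<^sub>E {..<2*n}"
      by (auto simp: king_tableaux_def)
  next
    fix T assume T: "T \<in> ?A" and cut: "\<forall>r<n. \<forall>c<s r. T (r, c) < 2*n \<longleftrightarrow> c < \<nu> r"
    show "restrict T (shape_cells n \<nu>) \<in> king_tableaux (2*n) n \<nu>"
      by (rule restrict_osp_code_mem_king_tableaux[OF T \<nu>_le cut])
  next
    fix T' assume "T' \<in> king_tableaux (2*n) n \<nu>"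
    then show "pad_tableau (2*n) n s \<nu> T' \<in> ?A"
      by (rule pad_mem_osp_code_tableaux[OF \<nu>])
  qed
  also have "\<dots> = (\<Sum>T\<in>king_tableaux (2*n) n \<nu>.
      (\<Prod>r<n. y ^ (s r - \<nu> r)) * tableau_weight (letter_weight X) n \<nu> T)"
    by (rule sum.cong[OF refl])
      (simp add: tableau_weight_pad[OF \<nu>_le] tableau_weight_osp_letter_weight osp_letter_weight_def)
  finally show ?thesis
    by (simp only: fiber_eq king_sum_def sum_distrib_left)
qed

text \<open>The primed letters of an orthosymplectic tableau fill a vertical strip.\<close>

theorem osp_code_sum:
  assumes mono: "\<And>r. s (Suc r) \<le> s r"
  shows "(\<Sum>T\<in>osp_code_tableaux n s. tableau_weight (osp_letter_weight X y n) n s T) =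
    (\<Sum>\<nu>\<in>vertical_strips n s. (\<Prod>r<n. y ^ (s r - \<nu> r)) * king_sum X (2*n) n \<nu>)"
proof -
  let ?A = "osp_code_tableaux n s"
  have "(\<Sum>T\<in>?A. tableau_weight (osp_letter_weight X y n) n s T) = (\<Sum>\<nu>\<in>vertical_strips n s.
      \<Sum>T\<in>{T \<in> ?A. row_cut (2*n) n s T = \<nu>}. tableau_weight (osp_letter_weight X y n) n s T)"
  proof (rule sum.group[symmetric])
    show "row_cut (2*n) n s ` ?A \<subseteq> vertical_strips n s"
      using row_cut_mem_vertical_strips[where s = s, OF _ mono] by blast
  qed simp_all
  also have "\<dots> = (\<Sum>\<nu>\<in>vertical_strips n s. (\<Prod>r<n. y ^ (s r - \<nu> r)) * king_sum X (2*n) n \<nu>)"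
    by (rule sum.cong[OF refl]) (erule sum_osp_code_tableaux_row_cut)
  finally show ?thesis .
qed

subsection \<open>The y-deformed alternant\<close>

text \<open>Lowering the exponent of column j by \<epsilon> j \<in> {0, 1}: a lowering is admissible unless it
  makes column j equal to column j+1 or, in the last column, makes the exponent 0 -- exactly the
  cases where the determinant visibly vanishes.\<close>

definition admissible_lowering :: "nat \<Rightarrow> (nat \<Rightarrow> nat) \<Rightarrow> (nat \<Rightarrow> nat) \<Rightarrow> bool" where
  "admissible_lowering n s \<epsilon> \<longleftrightarrow>
     (\<forall>j<n. \<epsilon> j = 1 \<longrightarrow> (if Suc j < n then \<epsilon> (Suc j) = 1 \<or> s (Suc j) < s j else 0 < s j))"

lemma admissible_lowering_pos:
  assumes adm: "admissible_lowering n s \<epsilon>" and mono: "\<And>r. s (Suc r) \<le> s r"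
    and "\<epsilon> j = 1" and "j < n"
  shows "0 < s j"
  using assms(3,4)
proof (induction "n - Suc j" arbitrary: j)
  case 0
  then show ?case using adm by (auto simp: admissible_lowering_def)
next
  case (Suc d)
  then have j1: "Suc j < n" by simp
  have "if Suc j < n then \<epsilon> (Suc j) = 1 \<or> s (Suc j) < s j else 0 < s j"
    using adm Suc.prems unfolding admissible_lowering_def by blast
  then have "\<epsilon> (Suc j) = 1 \<or> s (Suc j) < s j" using j1 by (simp only: if_True)
  then show ?case
  proof
    assume "\<epsilon> (Suc j) = 1"
    then have "0 < s (Suc j)" using Suc.hyps(1)[of "Suc j"] Suc.hyps(2) j1 by simp
    then show ?thesis using mono[of j] by simp
  qed simp
qed

lemma det_inadmissible_lowering:
  assumes mono: "\<And>r. s (Suc r) \<le> s r" and \<epsilon>: "\<epsilon> \<in> PiE {0..<n} (\<lambda>_. {0, 1})"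
    and bad: "\<not> admissible_lowering n s \<epsilon>"
  shows "det (mat n n (\<lambda>(i, j). pow_sub_inv (s j + n - j - \<epsilon> j) (X i))) = 0"
proof -
  obtain j where j: "j < n" and \<epsilon>j: "\<epsilon> j = 1"
    and fail: "\<not> (if Suc j < n then \<epsilon> (Suc j) = 1 \<or> s (Suc j) < s j else 0 < s j)"
    using bad by (auto simp: admissible_lowering_def)
  show ?thesis
  proof (cases "Suc j < n")
    case True
    then have "\<epsilon> (Suc j) = 0" and "s (Suc j) = s j"
      using fail \<epsilon> mono[of j] by auto
    then show ?thesis
      by (intro det_mat_eq_adjacent_cols[OF True]) (simp add: \<epsilon>j)
  next
    case False
    then have "s j = 0" and "Suc j = n" using fail j by auto
    then show ?thesis
      by (intro det_mat_zero_col[OF j]) (simp add: \<epsilon>j)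
  qed
qed

lemma lowering_mem_vertical_strips:
  assumes mono: "\<And>r. s (Suc r) \<le> s r" and \<epsilon>: "\<epsilon> \<in> PiE {0..<n} (\<lambda>_. {0, 1})"
    and adm: "admissible_lowering n s \<epsilon>"
  shows "(\<lambda>r. if r < n then s r - \<epsilon> r else 0) \<in> vertical_strips n s"
proof -
  have \<epsilon>01: "\<epsilon> j = 0 \<or> \<epsilon> j = 1" if "j < n" for j
    using PiE_mem[OF \<epsilon>, of j] that by auto
  have step: "(if Suc r < n then s (Suc r) - \<epsilon> (Suc r) else 0) \<le> s r - \<epsilon> r" if r: "r < n" for r
  proof (cases "Suc r < n")
    case True
    have "\<epsilon> r = 1 \<longrightarrow> (if Suc r < n then \<epsilon> (Suc r) = 1 \<or> s (Suc r) < s r else 0 < s r)"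
      using adm r unfolding admissible_lowering_def by blast
    then have "\<epsilon> r = 1 \<longrightarrow> \<epsilon> (Suc r) = 1 \<or> s (Suc r) < s r" using True by (simp only: if_True)
    then show ?thesis using \<epsilon>01[OF r] \<epsilon>01[OF True] mono[of r] True by auto
  qed simp
  have "s r \<le> Suc (s r - \<epsilon> r)" if "r < n" for r
    using \<epsilon>01[OF that] by auto
  then show ?thesis
    unfolding vertical_strips_def using step by auto
qed

lemma vertical_strip_admissible_lowering:
  assumes "\<nu> \<in> vertical_strips n s"
  shows "restrict (\<lambda>j. s j - \<nu> j) {0..<n} \<in> {\<epsilon> \<in> PiE {0..<n} (\<lambda>_. {0, 1}). admissible_lowering n s \<epsilon>}"
proof -
  have le: "r < n \<Longrightarrow> \<nu> r \<le> s r" and strip: "r < n \<Longrightarrow> s r \<le> Suc (\<nu> r)"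
    and \<nu>_mono: "r < n \<Longrightarrow> \<nu> (Suc r) \<le> \<nu> r" for r
    using assms by (auto simp: vertical_strips_def)
  have "s j - \<nu> j \<in> {0, 1}" if "j < n" for j
    using le[OF that] strip[OF that] by auto
  moreover have "admissible_lowering n s (restrict (\<lambda>j. s j - \<nu> j) {0..<n})"
    unfolding admissible_lowering_def
  proof (intro allI impI)
    fix j assume j: "j < n" and "restrict (\<lambda>j. s j - \<nu> j) {0..<n} j = 1"
    then have sj: "s j = Suc (\<nu> j)" using le[OF j] by auto
    show "if Suc j < n then restrict (\<lambda>j. s j - \<nu> j) {0..<n} (Suc j) = 1 \<or> s (Suc j) < s j else 0 < s j"
      using sj \<nu>_mono[OF j] le[of "Suc j"] strip[of "Suc j"] by auto
  qed
  ultimately show ?thesis by auto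
qed

lemma sum_admissible_lowerings:
  assumes mono: "\<And>r. s (Suc r) \<le> s r"
  shows "(\<Sum>\<epsilon>\<in>{\<epsilon> \<in> PiE {0..<n} (\<lambda>_. {0, 1}). admissible_lowering n s \<epsilon>}.
            (\<Prod>j<n. y ^ \<epsilon> j) * det (mat n n (\<lambda>(i, j). pow_sub_inv (s j + n - j - \<epsilon> j) (X i)))) =
    (\<Sum>\<nu>\<in>vertical_strips n s. (\<Prod>r<n. y ^ (s r - \<nu> r)) * sp_alternant X n \<nu>)"
proof (rule sum.reindex_bij_witness[where j = "\<lambda>\<epsilon> r. if r < n then s r - \<epsilon> r else 0"
                                     and i = "\<lambda>\<nu>. restrict (\<lambda>j. s j - \<nu> j) {0..<n}"])
  fix \<epsilon> assume "\<epsilon> \<in> {\<epsilon> \<in> PiE {0..<n} (\<lambda>_. {0, 1}). admissible_lowering n s \<epsilon>}"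
  then have \<epsilon>: "\<epsilon> \<in> PiE {0..<n} (\<lambda>_. {0, 1})" and adm: "admissible_lowering n s \<epsilon>" by auto
  have \<epsilon>_le: "\<epsilon> j \<le> s j" if j: "j < n" for j
    using PiE_mem[OF \<epsilon>, of j] admissible_lowering_pos[OF adm mono _ j] j by auto
  show "restrict (\<lambda>j. s j - (if j < n then s j - \<epsilon> j else 0)) {0..<n} = \<epsilon>"
    using \<epsilon> \<epsilon>_le by (auto simp: PiE_def extensional_def fun_eq_iff)
  show "(\<lambda>r. if r < n then s r - \<epsilon> r else 0) \<in> vertical_strips n s"
    by (rule lowering_mem_vertical_strips[OF mono \<epsilon> adm])
  show "(\<Prod>r<n. y ^ (s r - (if r < n then s r - \<epsilon> r else 0))) *
      sp_alternant X n (\<lambda>r. if r < n then s r - \<epsilon> r else 0) =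
    (\<Prod>j<n. y ^ \<epsilon> j) * det (mat n n (\<lambda>(i, j). pow_sub_inv (s j + n - j - \<epsilon> j) (X i)))"
    unfolding sp_alternant_def using \<epsilon>_le
    by (intro arg_cong2[where f = "(*)"] prod.cong det_mat_cong) (auto simp: add.commute)
next
  fix \<nu> assume \<nu>: "\<nu> \<in> vertical_strips n s"
  then show "(\<lambda>r. if r < n then s r - restrict (\<lambda>j. s j - \<nu> j) {0..<n} r else 0) = \<nu>"
    by (auto simp: vertical_strips_def fun_eq_iff not_less)
  show "restrict (\<lambda>j. s j - \<nu> j) {0..<n} \<in> {\<epsilon> \<in> PiE {0..<n} (\<lambda>_. {0, 1}). admissible_lowering n s \<epsilon>}"
    by (rule vertical_strip_admissible_lowering[OF \<nu>])
qed

theorem det_y_deformed_alternant: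
  assumes mono: "\<And>r. s (Suc r) \<le> s r"
  shows "det (mat n n (\<lambda>(i, j). pow_sub_inv (s j + n - j) (X i) + y * pow_sub_inv (s j + n - j - 1) (X i))) =
    (\<Sum>\<nu>\<in>vertical_strips n s. (\<Prod>r<n. y ^ (s r - \<nu> r)) * sp_alternant X n \<nu>)"
proof -
  let ?E = "PiE {0..<n} (\<lambda>_. {0::nat, 1})"
  let ?B = "\<lambda>\<epsilon>. (\<Prod>j<n. y ^ \<epsilon> j) * det (mat n n (\<lambda>(i, j). pow_sub_inv (s j + n - j - \<epsilon> j) (X i)))"
  have "det (mat n n (\<lambda>(i, j). pow_sub_inv (s j + n - j) (X i) + y * pow_sub_inv (s j + n - j - 1) (X i))) =
      det (mat n n (\<lambda>(i, j). \<Sum>e\<in>{0::nat, 1}. y ^ e * pow_sub_inv (s j + n - j - e) (X i)))"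
    by (rule det_mat_cong) simp
  also have "\<dots> = (\<Sum>\<epsilon>\<in>?E. det (mat n n (\<lambda>(i, j). y ^ \<epsilon> j * pow_sub_inv (s j + n - j - \<epsilon> j) (X i))))"
    by (rule det_mat_sum_cols) simp
  also have "\<dots> = sum ?B ?E"
    by (simp only: det_mat_scale_cols)
  also have "\<dots> = sum ?B {\<epsilon> \<in> ?E. admissible_lowering n s \<epsilon>}"
  proof (rule sum.mono_neutral_right)
    show "\<forall>\<epsilon>\<in>?E - {\<epsilon> \<in> ?E. admissible_lowering n s \<epsilon>}. ?B \<epsilon> = 0"
    proof
      fix \<epsilon> assume "\<epsilon> \<in> ?E - {\<epsilon> \<in> ?E. admissible_lowering n s \<epsilon>}"
      then have "det (mat n n (\<lambda>(i, j). pow_sub_inv (s j + n - j - \<epsilon> j) (X i))) = 0"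
        by (intro det_inadmissible_lowering[where s = s, OF mono]) auto
      then show "?B \<epsilon> = 0" by simp
    qed
  qed (auto simp: finite_PiE)
  also have "\<dots> = (\<Sum>\<nu>\<in>vertical_strips n s. (\<Prod>r<n. y ^ (s r - \<nu> r)) * sp_alternant X n \<nu>)"
    by (rule sum_admissible_lowerings[where s = s, OF mono])
  finally show ?thesis .
qed

subsection \<open>Coding orthosymplectic tableaux with one primed letter\<close>

text \<open>Subtracting 2 from the key numbers 1, 1bar, ..., n, nbar, 1' as 0, 1, ..., 2n, matching
  the letter coding of King tableaux.\<close>

definition osp_letter :: "nat \<Rightarrow> nat \<Rightarrow> ospent" where
  "osp_letter n k = (if k = 2*n then Pr 1 else if even k then Unb (k div 2 + 1) else Bar (k div 2 + 1))"

definition osp_entry_weight :: "(nat \<Rightarrow> 'a::field) \<Rightarrow> 'a \<Rightarrow> ospent \<Rightarrow> 'a" where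
  "osp_entry_weight x y e = (case e of Unb i \<Rightarrow> x i | Bar i \<Rightarrow> inverse (x i) | Pr j \<Rightarrow> y)"

lemma osp_entries_1_cases:
  assumes "e \<in> osp_entries n 1"
  obtains (Unb) i where "1 \<le> i" "i \<le> n" "e = Unb i"
    | (Bar) i where "1 \<le> i" "i \<le> n" "e = Bar i"
    | (Pr) "e = Pr 1"
  using assms by (auto simp: osp_entries_def)

lemma osp_key_bounds: "e \<in> osp_entries n 1 \<Longrightarrow> 2 \<le> osp_key n e \<and> osp_key n e - 2 \<le> 2*n"
  by (erule osp_entries_1_cases) auto

lemma osp_letter_key: "e \<in> osp_entries n 1 \<Longrightarrow> osp_letter n (osp_key n e - 2) = e"
proof (erule osp_entries_1_cases)
  fix i assume i: "1 \<le> i" "i \<le> n" "e = Unb i"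
  then have "osp_key n e - 2 = 2 * (i - 1)" and "2 * (i - 1) \<noteq> 2 * n" by simp_all
  then show ?thesis using i by (simp add: osp_letter_def)
next
  fix i assume i: "1 \<le> i" "i \<le> n" "e = Bar i"
  then have "osp_key n e - 2 = 2 * (i - 1) + 1" and "2 * (i - 1) + 1 \<noteq> 2 * n" by simp presburger
  then show ?thesis using i by (simp add: osp_letter_def)
qed (simp add: osp_letter_def)

lemma osp_letter_mem_key:
  assumes "k \<le> 2*n"
  shows "osp_letter n k \<in> osp_entries n 1 \<and> osp_key n (osp_letter n k) = k + 2"
proof (cases "k = 2*n")
  case False
  then have "k div 2 < n" using assms by simp
  then show ?thesis using False by (auto simp: osp_letter_def osp_entries_def)
qed (simp add: osp_letter_def osp_entries_def)

lemma is_primed_iff_key: "e \<in> osp_entries n 1 \<Longrightarrow> is_primed e \<longleftrightarrow> osp_key n e - 2 = 2*n"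
  by (erule osp_entries_1_cases) auto

lemma row_bound_iff_key:
  "e \<in> osp_entries n 1 \<Longrightarrow> \<not> is_primed e \<Longrightarrow> Suc r \<le> sym_index e \<longleftrightarrow> 2*r \<le> osp_key n e - 2"
  by (erule osp_entries_1_cases) auto

lemma osp_letter_weight_key:
  "e \<in> osp_entries n 1 \<Longrightarrow> osp_letter_weight (\<lambda>i. x (Suc i)) y n (osp_key n e - 2) = osp_entry_weight x y e"
proof (erule osp_entries_1_cases)
  fix i assume i: "1 \<le> i" "i \<le> n" "e = Unb i"
  then have "osp_key n e - 2 = 2 * (i - 1)" and "2 * (i - 1) \<noteq> 2 * n" by simp_all
  then show ?thesis using i by (simp add: osp_letter_weight_def letter_weight_def osp_entry_weight_def)
next
  fix i assume i: "1 \<le> i" "i \<le> n" "e = Bar i"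
  then have "osp_key n e - 2 = 2 * (i - 1) + 1" and "2 * (i - 1) + 1 \<noteq> 2 * n" by simp presburger
  then show ?thesis using i by (simp add: osp_letter_weight_def letter_weight_def osp_entry_weight_def)
qed (simp add: osp_letter_weight_def osp_entry_weight_def)

lemma osp_weight_eq_prod:
  fixes x :: "nat \<Rightarrow> 'a::field"
  assumes T: "T ` diagram lam \<subseteq> osp_entries n 1" and fin: "finite (diagram lam)"
  shows "osp_weight n 1 lam x (\<lambda>_. y) T = (\<Prod>p\<in>diagram lam. osp_entry_weight x y (T p))"
proof -
  let ?U = "Unb ` {1..n}" and ?B = "Bar ` {1..n}" and ?P = "Pr ` {1..1}"
  let ?G = "\<lambda>e. osp_entry_weight x y e ^ osp_count lam T e"
  have "(\<Prod>p\<in>diagram lam. osp_entry_weight x y (T p)) =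
      (\<Prod>e\<in>osp_entries n 1. \<Prod>p\<in>{p \<in> diagram lam. T p = e}. osp_entry_weight x y (T p))"
    by (rule prod.group[symmetric]) (use fin T in \<open>auto simp: osp_entries_def\<close>)
  also have "\<dots> = (\<Prod>e\<in>?U \<union> ?B \<union> ?P. ?G e)"
    by (simp add: osp_count_def osp_entries_def)
  also have "\<dots> = (\<Prod>e\<in>?U \<union> ?B. ?G e) * (\<Prod>e\<in>?P. ?G e)"
    by (rule prod.union_disjoint) auto
  also have "\<dots> = (\<Prod>e\<in>?U. ?G e) * (\<Prod>e\<in>?B. ?G e) * (\<Prod>e\<in>?P. ?G e)"
    by (subst prod.union_disjoint) auto
  also have "\<dots> = osp_weight n 1 lam x (\<lambda>_. y) T"
    by (simp add: osp_weight_def prod.reindex inj_on_def osp_entry_weight_def prod.distrib)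
  finally show ?thesis ..
qed

definition osp_encode :: "nat \<Rightarrow> (nat \<Rightarrow> nat) \<Rightarrow> (nat \<times> nat \<Rightarrow> ospent) \<Rightarrow> nat \<times> nat \<Rightarrow> nat" where
  "osp_encode n s T p = (if p \<in> shape_cells n s then osp_key n (T p) - 2 else undefined)"

definition osp_decode :: "nat \<Rightarrow> (nat \<Rightarrow> nat) \<Rightarrow> (nat \<times> nat \<Rightarrow> nat) \<Rightarrow> nat \<times> nat \<Rightarrow> ospent" where
  "osp_decode n s U p = (if p \<in> shape_cells n s then osp_letter n (U p) else undefined)"

lemma osp_encode_mem_osp_code_tableaux:
  assumes T: "is_osp_tableau n 1 lam T" and cells: "diagram lam = shape_cells n s"
  shows "osp_encode n s T \<in> osp_code_tableaux n s"
proof -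
  have ent: "T p \<in> osp_entries n 1" if "p \<in> shape_cells n s" for p
    using T that cells by (auto simp: is_osp_tableau_def simp del: mem_shape_cells)
  note key = osp_key_bounds[OF ent] and primed = is_primed_iff_key[OF ent]
  have row: "osp_key n (T (r, c)) \<le> osp_key n (T (r, Suc c)) \<and>
      (is_primed (T (r, c)) \<and> is_primed (T (r, Suc c)) \<longrightarrow> osp_key n (T (r, c)) < osp_key n (T (r, Suc c)))"
    if "(r, c) \<in> shape_cells n s" "(r, Suc c) \<in> shape_cells n s" for r c
    using T that unfolding is_osp_tableau_def cells by blast
  have col: "osp_key n (T (r, c)) \<le> osp_key n (T (Suc r, c)) \<and>
      (\<not> is_primed (T (r, c)) \<and> \<not> is_primed (T (Suc r, c)) \<longrightarrow> osp_key n (T (r, c)) < osp_key n (T (Suc r, c)))"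
    if "(r, c) \<in> shape_cells n s" "(Suc r, c) \<in> shape_cells n s" for r c
    using T that unfolding is_osp_tableau_def cells by blast
  have bound: "Suc r \<le> sym_index (T (r, c))"
    if "(r, c) \<in> shape_cells n s" "\<not> is_primed (T (r, c))" for r c
    using T that unfolding is_osp_tableau_def cells by blast
  show ?thesis
    unfolding osp_code_tableaux_def
  proof (intro CollectI conjI allI impI)
    show "osp_encode n s T \<in> shape_cells n s \<rightarrow>\<^sub>E {..2*n}"
      using key by (auto simp: osp_encode_def simp del: mem_shape_cells)
  next
    fix r c assume "(r, c) \<in> shape_cells n s \<and> (r, Suc c) \<in> shape_cells n s"
    then have rc: "(r, c) \<in> shape_cells n s" "(r, Suc c) \<in> shape_cells n s" by auto
    show "osp_encode n s T (r, c) \<le> osp_encode n s T (r, Suc c)"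
      using row[OF rc] rc by (simp add: osp_encode_def diff_le_mono)
    show "\<not> (osp_encode n s T (r, c) = 2*n \<and> osp_encode n s T (r, Suc c) = 2*n)"
      using row[OF rc] primed[OF rc(1)] primed[OF rc(2)] key[OF rc(1)] key[OF rc(2)] rc
      by (auto simp: osp_encode_def)
  next
    fix r c assume "(r, c) \<in> shape_cells n s \<and> (Suc r, c) \<in> shape_cells n s"
    then have rc: "(r, c) \<in> shape_cells n s" "(Suc r, c) \<in> shape_cells n s" by auto
    show "osp_encode n s T (r, c) \<le> osp_encode n s T (Suc r, c)"
      using col[OF rc] rc by (simp add: osp_encode_def diff_le_mono)
    show "osp_encode n s T (r, c) < osp_encode n s T (Suc r, c)" if "osp_encode n s T (Suc r, c) < 2*n"
      using that col[OF rc] primed[OF rc(1)] primed[OF rc(2)] key[OF rc(1)] key[OF rc(2)] rc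
      by (auto simp: osp_encode_def)
  next
    fix r c assume "(r, c) \<in> shape_cells n s \<and> osp_encode n s T (r, c) < 2*n"
    then show "2*r \<le> osp_encode n s T (r, c)"
      using bound primed row_bound_iff_key[OF ent] by (auto simp: osp_encode_def)
  qed
qed

lemma osp_decode_is_osp_tableau:
  assumes U: "U \<in> osp_code_tableaux n s" and cells: "diagram lam = shape_cells n s"
  shows "is_osp_tableau n 1 lam (osp_decode n s U)"
proof -
  have U_le: "U p \<le> 2*n" if "p \<in> shape_cells n s" for p
    using U that by (auto simp: osp_code_tableaux_def simp del: mem_shape_cells)
  note ent = osp_letter_mem_key[OF U_le, THEN conjunct1]
    and key = osp_letter_mem_key[OF U_le, THEN conjunct2]
  have primed: "is_primed (osp_letter n (U p)) \<longleftrightarrow> U p = 2*n" if "p \<in> shape_cells n s" for p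
    using is_primed_iff_key[OF ent[OF that]] key[OF that] by simp
  show ?thesis
    unfolding is_osp_tableau_def cells
  proof (intro conjI allI impI)
    show "osp_decode n s U \<in> shape_cells n s \<rightarrow>\<^sub>E osp_entries n 1"
      using ent by (auto simp: osp_decode_def simp del: mem_shape_cells)
  next
    fix r c assume rc: "(r, c) \<in> shape_cells n s \<and> (r, Suc c) \<in> shape_cells n s"
    then have "U (r, c) \<le> U (r, Suc c) \<and> \<not> (U (r, c) = 2*n \<and> U (r, Suc c) = 2*n)"
      using U unfolding osp_code_tableaux_def by blast
    then show "osp_key n (osp_decode n s U (r, c)) \<le> osp_key n (osp_decode n s U (r, Suc c))"
      and "is_primed (osp_decode n s U (r, c)) \<and> is_primed (osp_decode n s U (r, Suc c)) \<Longrightarrow>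
        osp_key n (osp_decode n s U (r, c)) < osp_key n (osp_decode n s U (r, Suc c))"
      using rc key primed by (auto simp: osp_decode_def simp del: mem_shape_cells)
  next
    fix r c assume rc: "(r, c) \<in> shape_cells n s \<and> (Suc r, c) \<in> shape_cells n s"
    then have "U (r, c) \<le> U (Suc r, c) \<and> (U (Suc r, c) < 2*n \<longrightarrow> U (r, c) < U (Suc r, c))"
      using U unfolding osp_code_tableaux_def by blast
    then show "osp_key n (osp_decode n s U (r, c)) \<le> osp_key n (osp_decode n s U (Suc r, c))"
      and "\<not> is_primed (osp_decode n s U (r, c)) \<and> \<not> is_primed (osp_decode n s U (Suc r, c)) \<Longrightarrow>
        osp_key n (osp_decode n s U (r, c)) < osp_key n (osp_decode n s U (Suc r, c))"
      using rc key primed U_le[of "(Suc r, c)"]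
      by (auto simp: osp_decode_def osp_letter_def le_less simp del: mem_shape_cells)
  next
    fix r c assume rc: "(r, c) \<in> shape_cells n s \<and> \<not> is_primed (osp_decode n s U (r, c))"
    then have "U (r, c) < 2*n" using primed U_le[of "(r, c)"] by (auto simp: osp_decode_def osp_letter_def le_less)
    then have "2*r \<le> U (r, c)" using U rc unfolding osp_code_tableaux_def by blast
    then show "Suc r \<le> sym_index (osp_decode n s U (r, c))"
      using rc row_bound_iff_key[OF ent] key by (auto simp: osp_decode_def)
  qed
qed

lemma tableau_weight_osp_encode:
  fixes x :: "nat \<Rightarrow> 'a::field"
  assumes PE: "T \<in> shape_cells n s \<rightarrow>\<^sub>E osp_entries n 1" and cells: "diagram lam = shape_cells n s"
  shows "tableau_weight (osp_letter_weight (\<lambda>i. x (Suc i)) y n) n s (osp_encode n s T) =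
    osp_weight n 1 lam x (\<lambda>_. y) T"
proof -
  have "tableau_weight (osp_letter_weight (\<lambda>i. x (Suc i)) y n) n s (osp_encode n s T) =
      (\<Prod>p\<in>shape_cells n s. osp_letter_weight (\<lambda>i. x (Suc i)) y n (osp_encode n s T p))"
    by (simp add: tableau_weight_def shape_cells_def prod.Sigma)
  also have "\<dots> = (\<Prod>p\<in>shape_cells n s. osp_entry_weight x y (T p))"
    by (rule prod.cong[OF refl])
      (simp add: osp_encode_def osp_letter_weight_key[OF PiE_mem[OF PE]] del: mem_shape_cells)
  also have "\<dots> = osp_weight n 1 lam x (\<lambda>_. y) T"
    using PE by (subst osp_weight_eq_prod) (auto simp: cells)
  finally show ?thesis .
qed

lemma spo_eq_osp_code_sum:
  fixes x :: "nat \<Rightarrow> 'a::field"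
  assumes cells: "diagram lam = shape_cells n s"
  shows "spo n 1 lam x (\<lambda>_. y) =
    (\<Sum>U\<in>osp_code_tableaux n s. tableau_weight (osp_letter_weight (\<lambda>i. x (Suc i)) y n) n s U)"
  unfolding spo_def
proof (rule sum.reindex_bij_witness[where j = "osp_encode n s" and i = "osp_decode n s"])
  fix T assume "T \<in> {T. is_osp_tableau n 1 lam T}"
  then have T: "is_osp_tableau n 1 lam T" by simp
  then have PE: "T \<in> shape_cells n s \<rightarrow>\<^sub>E osp_entries n 1" by (simp add: is_osp_tableau_def cells)
  show "osp_decode n s (osp_encode n s T) = T"
  proof
    fix p
    show "osp_decode n s (osp_encode n s T) p = T p"
      using osp_letter_key[OF PiE_mem[OF PE]] PiE_arb[OF PE]
      by (cases "p \<in> shape_cells n s") (auto simp: osp_decode_def osp_encode_def simp del: mem_shape_cells)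
  qed
  show "osp_encode n s T \<in> osp_code_tableaux n s"
    by (rule osp_encode_mem_osp_code_tableaux[OF T cells])
  show "tableau_weight (osp_letter_weight (\<lambda>i. x (Suc i)) y n) n s (osp_encode n s T) =
      osp_weight n 1 lam x (\<lambda>_. y) T"
    by (rule tableau_weight_osp_encode[OF PE cells])
next
  fix U assume U: "U \<in> osp_code_tableaux n s"
  then have "U \<in> shape_cells n s \<rightarrow>\<^sub>E {..2*n}" by (simp add: osp_code_tableaux_def)
  then show "osp_encode n s (osp_decode n s U) = U"
  proof -
    assume PE: "U \<in> shape_cells n s \<rightarrow>\<^sub>E {..2*n}"
    show ?thesis
    proof
      fix p
      show "osp_encode n s (osp_decode n s U) p = U p"
        using osp_letter_mem_key[of "U p" n] PiE_mem[OF PE, of p] PiE_arb[OF PE, of p]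
        by (cases "p \<in> shape_cells n s") (auto simp: osp_decode_def osp_encode_def simp del: mem_shape_cells)
    qed
  qed
  show "osp_decode n s U \<in> {T. is_osp_tableau n 1 lam T}"
    using osp_decode_is_osp_tableau[OF U cells] by simp
qed

lemma sp_denominator_shift:
  fixes x :: "nat \<Rightarrow> 'a::field"
  shows "(\<Prod>i\<in>{1..n}. x i - inverse (x i)) *
         (\<Prod>(i, j)\<in>{(i, j). 1 \<le> i \<and> i < j \<and> j \<le> n}. x i + inverse (x i) - x j - inverse (x j)) =
       sp_denominator (\<lambda>i. x (Suc i)) n"
proof -
  have pairs: "{(i, j). 1 \<le> i \<and> i < j \<and> j \<le> n} = (\<lambda>(j, i). (Suc i, Suc j)) ` (SIGMA j:{..<n}. {..<j})"
  proof (intro equalityI subsetI)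
    fix p assume "p \<in> {(i, j). 1 \<le> i \<and> i < j \<and> j \<le> n}"
    then obtain i j where p: "p = (i, j)" and ij: "1 \<le> i" "i < j" "j \<le> n" by auto
    then have "(j - 1, i - 1) \<in> (SIGMA j:{..<n}. {..<j})" and "p = (\<lambda>(j, i). (Suc i, Suc j)) (j - 1, i - 1)"
      by auto
    then show "p \<in> (\<lambda>(j, i). (Suc i, Suc j)) ` (SIGMA j:{..<n}. {..<j})" by blast
  qed auto
  have inj: "inj_on (\<lambda>(j, i). (Suc i, Suc j)) (SIGMA j:{..<n}. {..<j})"
    by (auto simp: inj_on_def)
  have "(\<Prod>j<n. \<Prod>i<j. x (Suc i) + inverse (x (Suc i)) - x (Suc j) - inverse (x (Suc j))) =
      (\<Prod>(j, i)\<in>(SIGMA j:{..<n}. {..<j}). x (Suc i) + inverse (x (Suc i)) - x (Suc j) - inverse (x (Suc j)))"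
    by (rule prod.Sigma) auto
  also have "\<dots> = (\<Prod>p\<in>(SIGMA j:{..<n}. {..<j}).
      ((\<lambda>(i, j). x i + inverse (x i) - x j - inverse (x j)) \<circ> (\<lambda>(j, i). (Suc i, Suc j))) p)"
    by (intro prod.cong refl) auto
  also have "\<dots> = (\<Prod>(i, j)\<in>{(i, j). 1 \<le> i \<and> i < j \<and> j \<le> n}. x i + inverse (x i) - x j - inverse (x j))"
    unfolding pairs by (rule prod.reindex[OF inj, symmetric])
  finally have "(\<Prod>(i, j)\<in>{(i, j). 1 \<le> i \<and> i < j \<and> j \<le> n}. x i + inverse (x i) - x j - inverse (x j)) =
      (\<Prod>j<n. \<Prod>i<j. x (Suc i) + inverse (x (Suc i)) - x (Suc j) - inverse (x (Suc j)))"
    by (rule sym)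
  moreover have "(\<Prod>i\<in>{1..n}. x i - inverse (x i)) = (\<Prod>i<n. x (Suc i) - inverse (x (Suc i)))"
    unfolding One_nat_def prod.atLeast1_atMost_eq ..
  ultimately show ?thesis by (simp add: sp_denominator_def)
qed

theorem sp_denominator_mul_osp_code_sum:
  fixes X :: "nat \<Rightarrow> 'a::field"
  assumes X: "\<And>i. i < n \<Longrightarrow> X i \<noteq> 0" and mono: "\<And>r. s (Suc r) \<le> s r"
  shows "sp_denominator X n * (\<Sum>T\<in>osp_code_tableaux n s. tableau_weight (osp_letter_weight X y n) n s T) =
    det (mat n n (\<lambda>(i, j). pow_sub_inv (s j + n - j) (X i) + y * pow_sub_inv (s j + n - j - 1) (X i)))"
proof -
  have "sp_denominator X n * (\<Sum>T\<in>osp_code_tableaux n s. tableau_weight (osp_letter_weight X y n) n s T) =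
      (\<Sum>\<nu>\<in>vertical_strips n s. (\<Prod>r<n. y ^ (s r - \<nu> r)) * (sp_denominator X n * king_sum X (2*n) n \<nu>))"
    unfolding osp_code_sum[where s = s, OF mono] by (simp add: sum_distrib_left mult_ac)
  also have "\<dots> = (\<Sum>\<nu>\<in>vertical_strips n s. (\<Prod>r<n. y ^ (s r - \<nu> r)) * sp_alternant X n \<nu>)"
  proof (rule sum.cong[OF refl])
    fix \<nu> assume \<nu>: "\<nu> \<in> vertical_strips n s"
    have "sp_denominator X n * king_sum X (2*n) n \<nu> = sp_alternant X n \<nu>"
    proof (rule sp_denominator_mul_king_sum[OF X])
      show "\<nu> (Suc r) \<le> \<nu> r" for r by (rule vertical_strips_mono[OF \<nu>])
      show "n \<le> r \<Longrightarrow> \<nu> r = 0" for r using \<nu> by (simp add: vertical_strips_def)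
    qed
    then show "(\<Prod>r<n. y ^ (s r - \<nu> r)) * (sp_denominator X n * king_sum X (2*n) n \<nu>) =
        (\<Prod>r<n. y ^ (s r - \<nu> r)) * sp_alternant X n \<nu>" by simp
  qed
  also have "\<dots> = det (mat n n (\<lambda>(i, j). pow_sub_inv (s j + n - j) (X i) + y * pow_sub_inv (s j + n - j - 1) (X i)))"
    by (rule det_y_deformed_alternant[where s = s, OF mono, symmetric])
  finally show ?thesis .
qed

theorem corollary1p4:
  fixes n :: nat and lam :: "nat list" and x :: "nat \<Rightarrow> 'a::field" and y :: 'a
  assumes "n \<ge> 1"
    and "length lam = n" and "sorted_wrt (\<ge>) lam"
    and "\<forall>i\<in>{1..n}. x i \<noteq> 0"
    and "(\<Prod>i\<in>{1..n}. x i - inverse (x i)) *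
         (\<Prod>(i, j)\<in>{(i, j). 1 \<le> i \<and> i < j \<and> j \<le> n}.
            x i + inverse (x i) - x j - inverse (x j)) \<noteq> 0"
  shows "spo n 1 lam x (\<lambda>_. y) =
    det (mat n n (\<lambda>(i, j).
        x (Suc i) ^ (lam ! j + n - j) - inverse (x (Suc i)) ^ (lam ! j + n - j)
        + y * (x (Suc i) ^ (lam ! j + n - j - 1) - inverse (x (Suc i)) ^ (lam ! j + n - j - 1))))
    / ((\<Prod>i\<in>{1..n}. x i - inverse (x i)) *
       (\<Prod>(i, j)\<in>{(i, j). 1 \<le> i \<and> i < j \<and> j \<le> n}.
          x i + inverse (x i) - x j - inverse (x j)))"
proof -
  define s where "s r = (if r < n then lam ! r else 0)" for r
  define X where "X = (\<lambda>i. x (Suc i))"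
  have mono: "s (Suc r) \<le> s r" for r
    using sorted_wrt_nth_less[OF assms(3), of r "Suc r"] assms(2) by (auto simp: s_def)
  have cells: "diagram lam = shape_cells n s"
    using assms(2) by (auto simp: diagram_def s_def)
  have X0: "X i \<noteq> 0" if "i < n" for i
    using assms(4) that by (simp add: X_def)
  have "sp_denominator X n * spo n 1 lam x (\<lambda>_. y) =
      det (mat n n (\<lambda>(i, j). pow_sub_inv (s j + n - j) (X i) + y * pow_sub_inv (s j + n - j - 1) (X i)))"
    unfolding spo_eq_osp_code_sum[OF cells] X_def[symmetric]
    by (rule sp_denominator_mul_osp_code_sum[where X = X and s = s and n = n, OF X0 mono])
  also have "\<dots> = det (mat n n (\<lambda>(i, j).
        x (Suc i) ^ (lam ! j + n - j) - inverse (x (Suc i)) ^ (lam ! j + n - j)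
        + y * (x (Suc i) ^ (lam ! j + n - j - 1) - inverse (x (Suc i)) ^ (lam ! j + n - j - 1))))"
    by (rule det_mat_cong) (simp add: s_def X_def pow_sub_inv_def)
  finally have "sp_denominator X n * spo n 1 lam x (\<lambda>_. y) = \<dots>" .
  moreover have "sp_denominator X n \<noteq> 0"
    using assms(5) unfolding sp_denominator_shift X_def .
  ultimately show ?thesis
    unfolding sp_denominator_shift X_def[symmetric] by (simp add: nonzero_eq_divide_eq mult.commute)
qed

end
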